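(* Let $P\in\Psi^w(\mathscr A_\theta)$, $w>0$, be elliptic with principal symbol $\rho_w$, and assume $\Theta(P)\ne\emptyset$. Then $\Theta(P)$ is an open cone in $\C^*$.
   Context: Noncommutative torus: fix $n\ge2$, real antisymmetric $\theta$; $A_\theta$ is the C*-algebra generated by unitaries $U_1,\dots,U_n$ with $U_kU_j=e^{2i\pi\theta_{jk}}U_jU_k$; $\mathscr A_\theta$ is its dense Fréchet subalgebra of smooth elements for the action $\alpha_s(U^k)=e^{is\cdot k}U^k$, where $U^k=U_1^{k_1}\cdots U_n^{k_n}$. $P\in\Psi^w(\mathscr A_\theta)$ means $P(\sum u_kU^k)=\sum u_k\rho(k)U^k$ with $\rho\in C^\infty(\R^n;\mathscr A_\theta)$ classical: $\rho\sim\sum_{j\ge0}\rho_{w-j}$, $\rho_{w-j}\in C^\infty(\R^n\setminus0;\mathscr A_\theta)$ homogeneous of degree $w-j$; $\rho_w$ is the principal symbol; $P$ elliptic means $\rho_w(\xi)$ is invertible in $\mathscr A_\theta$ for all $\xi\ne0$. $\Theta(P)=\{\lambda\in\C^*:\rho_w(\xi)-\lambda\text{ is invertible for all }\xi\in\R^n\setminus0\}$. A cone in $\C^*$ is a subset $\Theta$ with $t\Theta\subset\Theta$ for all $t>0$. *)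

theory Defs
  imports "HOL-Analysis.Analysis"
begin

text \<open>An element sum u_k U^k of the smooth
algebra is represented by its coefficient function u on the lattice Z^n = int^'n.\<close>

definition lat :: "int^'n::finite \<Rightarrow> real^'n" where
  "lat k = (\<chi> i. real_of_int (k$i))"

definition nct_smooth :: "(int^'n::finite \<Rightarrow> complex) set" where
  "nct_smooth = {u. \<forall>N::nat. \<exists>C. \<forall>k. (1 + norm (lat k)) ^ N * cmod (u k) \<le> C}"

text \<open>U^k U^l = twist k l U^(k+l), where U^k = U_1^k1 ... U_n^kn (increasing order of
the index type) and U_i U_j = e^(2 pi i theta_ji) U_j U_i.\<close>

definition twist :: "real^'n::{finite,linorder}^'n::{finite,linorder} \<Rightarrow> int^'n::{finite,linorder} \<Rightarrow> int^'n::{finite,linorder} \<Rightarrow> complex" where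
  "twist \<theta> k l = cis (2 * pi * (\<Sum>i\<in>UNIV. \<Sum>j\<in>{j. j < i}.
      \<theta>$j$i * real_of_int (k$i) * real_of_int (l$j)))"

definition nct_mult :: "real^'n::{finite,linorder}^'n::{finite,linorder} \<Rightarrow> (int^'n::{finite,linorder} \<Rightarrow> complex)
    \<Rightarrow> (int^'n::{finite,linorder} \<Rightarrow> complex) \<Rightarrow> (int^'n::{finite,linorder} \<Rightarrow> complex)" where
  "nct_mult \<theta> u v = (\<lambda>m. infsum (\<lambda>k. u k * v (m - k) * twist \<theta> k (m - k)) UNIV)"

definition nct_one :: "int^'n::finite \<Rightarrow> complex" where
  "nct_one = (\<lambda>k. if k = 0 then 1 else 0)"

definition nct_invertible :: "real^'n::{finite,linorder}^'n::{finite,linorder} \<Rightarrow> (int^'n::{finite,linorder} \<Rightarrow> complex) \<Rightarrow> bool" where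
  "nct_invertible \<theta> u \<longleftrightarrow> u \<in> nct_smooth \<and>
     (\<exists>v\<in>nct_smooth. nct_mult \<theta> u v = nct_one \<and> nct_mult \<theta> v u = nct_one)"

definition coef_partial :: "'n \<Rightarrow> (real^'n::finite \<Rightarrow> complex) \<Rightarrow> real^'n \<Rightarrow> complex" where
  "coef_partial i g \<xi> = vector_derivative (\<lambda>t::real. g (\<xi> + t *\<^sub>R axis i 1)) (at 0)"

fun pds :: "'n list \<Rightarrow> (real^'n::finite \<Rightarrow> complex) \<Rightarrow> real^'n \<Rightarrow> complex" where
  "pds [] g = g"
| "pds (i # is) g = coef_partial i (pds is g)"

definition has_all_partials_on :: "(real^'n::finite) set \<Rightarrow> (real^'n \<Rightarrow> complex) \<Rightarrow> bool" where
  "has_all_partials_on S g \<longleftrightarrow> (\<forall>is i. \<forall>\<xi>\<in>S.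
     ((\<lambda>t::real. pds is g (\<xi> + t *\<^sub>R axis i 1)) has_vector_derivative pds (i # is) g \<xi>) (at 0))"

text \<open>Smoothness of a function with values in the smooth algebra (Frechet topology given by
the seminorms sup_k (1+|k|)^N |u_k|): all coefficientwise partial derivatives exist and are
locally bounded in every seminorm.\<close>
definition valued_smooth_on :: "(real^'n::finite) set \<Rightarrow> (real^'n \<Rightarrow> int^'n \<Rightarrow> complex) \<Rightarrow> bool" where
  "valued_smooth_on S F \<longleftrightarrow> (\<forall>k. has_all_partials_on S (\<lambda>\<xi>. F \<xi> k)) \<and>
     (\<forall>is (N::nat) K. compact K \<and> K \<subseteq> S \<longrightarrow>
        (\<exists>C. \<forall>\<xi>\<in>K. \<forall>k. (1 + norm (lat k)) ^ N * cmod (pds is (\<lambda>\<eta>. F \<eta> k) \<xi>) \<le> C))"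

text \<open>Classical symbol of order w with homogeneous components \<rho>s j of degree w - j
(\<rho>s 0 is the principal symbol).\<close>
definition classical_symbol :: "real \<Rightarrow> (real^'n::finite \<Rightarrow> int^'n \<Rightarrow> complex)
    \<Rightarrow> (nat \<Rightarrow> real^'n \<Rightarrow> int^'n \<Rightarrow> complex) \<Rightarrow> bool" where
  "classical_symbol w \<rho> \<rho>s \<longleftrightarrow>
     valued_smooth_on UNIV \<rho> \<and>
     (\<forall>is (N::nat). \<exists>C. \<forall>\<xi> k. (1 + norm (lat k)) ^ N * cmod (pds is (\<lambda>\<eta>. \<rho> \<eta> k) \<xi>)
        \<le> C * (1 + norm \<xi>) powr (w - real (length is))) \<and>
     (\<forall>j. valued_smooth_on (- {0}) (\<rho>s j) \<and>
        (\<forall>t::real. \<forall>\<xi>. t > 0 \<and> \<xi> \<noteq> 0 \<longrightarrow>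
           \<rho>s j (t *\<^sub>R \<xi>) = (\<lambda>k. complex_of_real (t powr (w - real j)) * \<rho>s j \<xi> k))) \<and>
     (\<forall>M is (N::nat). \<exists>C. \<forall>\<xi> k. norm \<xi> \<ge> 1 \<longrightarrow>
        (1 + norm (lat k)) ^ N * cmod (pds is (\<lambda>\<eta>. \<rho> \<eta> k - (\<Sum>j<M. \<rho>s j \<eta> k)) \<xi>)
          \<le> C * norm \<xi> powr (w - real M - real (length is)))"

definition nct_elliptic :: "real^'n::{finite,linorder}^'n::{finite,linorder} \<Rightarrow> (real^'n::{finite,linorder} \<Rightarrow> int^'n::{finite,linorder} \<Rightarrow> complex) \<Rightarrow> bool" where
  "nct_elliptic \<theta> \<rho>w \<longleftrightarrow> (\<forall>\<xi>. \<xi> \<noteq> 0 \<longrightarrow> nct_invertible \<theta> (\<rho>w \<xi>))"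

definition Theta :: "real^'n::{finite,linorder}^'n::{finite,linorder} \<Rightarrow> (real^'n::{finite,linorder} \<Rightarrow> int^'n::{finite,linorder} \<Rightarrow> complex) \<Rightarrow> complex set" where
  "Theta \<theta> \<rho>w = {z. z \<noteq> 0 \<and>
     (\<forall>\<xi>. \<xi> \<noteq> 0 \<longrightarrow> nct_invertible \<theta> (\<lambda>k. \<rho>w \<xi> k - z * nct_one k))}"

definition is_cone :: "complex set \<Rightarrow> bool" where
  "is_cone \<Theta> \<longleftrightarrow> (\<forall>t::real. \<forall>z\<in>\<Theta>. t > 0 \<longrightarrow> complex_of_real t * z \<in> \<Theta>)"

end

theory Submission
  imports Defs
begin

text \<open>The cone property is homogeneity: \<open>\<rho>\<^sub>w(s\<xi>) - z = s\<^sup>w (\<rho>\<^sub>w(\<xi>) - s\<^sup>-\<^sup>w z)\<close> with \<open>w > 0\<close>.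
  For openness, fix \<open>z\<^sub>0 \<in> \<Theta>(P)\<close>. Writing \<open>\<xi> = r\<eta>\<close> with \<open>|\<eta>| = 1\<close>, the element \<open>\<rho>\<^sub>w(\<xi>) - z\<close> is a
  positive multiple of \<open>(1 - t) \<rho>\<^sub>w(\<eta>) - t z\<^sub>0 - t (z - z\<^sub>0)\<close> with \<open>t = 1 / (r\<^sup>w + 1) \<in> [0, 1]\<close>.
  The family \<open>(1 - t) \<rho>\<^sub>w(\<eta>) - t z\<^sub>0\<close> is invertible on the compact set \<open>S\<^sup>n\<^sup>-\<^sup>1 \<times> [0, 1]\<close> (by
  ellipticity at \<open>t = 0\<close>, by \<open>z\<^sub>0 \<noteq> 0\<close> at \<open>t = 1\<close> and by the cone property in between) and
  continuous for the \<open>\<ell>\<^sup>1\<close> norm of the coefficients, so its inverses are uniformly bounded in that norm.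
  A Neumann series then inverts the perturbation by \<open>t (z - z\<^sub>0)\<close> for \<open>z\<close> close to \<open>z\<^sub>0\<close>. The Neumann
  series converges in the smooth algebra and not only in \<open>\<ell>\<^sup>1\<close>, because the weighted norms of powers
  grow like \<open>wnorm N (d\<^sup>n) \<le> n\<^sup>N\<^sup>+\<^sup>1 wnorm N d (wnorm 0 d)\<^sup>n\<^sup>-\<^sup>1\<close>.\<close>

section \<open>Weighted \<open>\<ell>\<^sup>1\<close> norms on the lattice\<close>

definition weight :: "int^'n::finite \<Rightarrow> real" where
  "weight k = 1 + norm (lat k)"

lemma lat_add: "lat (k + l) = lat k + lat l"
  by (simp add: lat_def vec_eq_iff)

lemma weight_0 [simp]: "weight 0 = 1"
  by (simp add: weight_def lat_def vec_eq_iff zero_vec_def[symmetric])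

lemma weight_ge_1: "1 \<le> weight k"
  by (simp add: weight_def)

lemma weight_pos: "0 < weight k"
  using weight_ge_1[of k] by linarith

lemma weight_power_nonneg [simp]: "0 \<le> weight k ^ N"
  using weight_pos[of k] by simp

lemma weight_add_le: "weight (k + l) \<le> weight k + weight l"
  using norm_triangle_ineq[of "lat k" "lat l"] by (simp add: weight_def lat_add)

lemma weight_power_add_le: "weight (k + l) ^ N \<le> weight k ^ N * weight l ^ N"
proof -
  have "weight (k + l) \<le> 1 + norm (lat k) + norm (lat l)"
    using norm_triangle_ineq[of "lat k" "lat l"] by (simp add: weight_def lat_add)
  also have "\<dots> \<le> weight k * weight l"
    by (simp add: weight_def algebra_simps)
  finally show ?thesis
    by (metis power_mono power_mult_distrib weight_pos less_imp_le)
qed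

lemma summable_on_int_inverse_square:
  "(\<lambda>j::int. 1 / (1 + \<bar>real_of_int j\<bar>)^2) summable_on UNIV"
proof -
  let ?f = "\<lambda>j::int. 1 / (1 + \<bar>real_of_int j\<bar>)^2"
  have nat: "(\<lambda>n::nat. 1 / (1 + real n)^2) summable_on UNIV"
  proof -
    have "summable (\<lambda>n::nat. inverse (real (Suc n) ^ 2))"
      using inverse_power_summable[of 2, where 'a=real] by (subst summable_Suc_iff) simp
    then show ?thesis
      by (simp add: summable_on_UNIV_nonneg_real_iff divide_inverse)
  qed
  have "?f summable_on range int"
    using nat by (subst summable_on_reindex) (auto simp: o_def)
  moreover have "?f summable_on range (\<lambda>n. - int n)"
    using nat by (subst summable_on_reindex) (auto simp: o_def inj_on_def)
  moreover have "range int \<union> range (\<lambda>n. - int n) = UNIV"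
    by (auto simp: image_iff intro: int_cases)
  ultimately show ?thesis
    by (metis summable_on_union)
qed

lemma summable_on_lattice_inverse_square:
  "(\<lambda>k::int^'n::finite. \<Prod>i\<in>UNIV. 1 / (1 + \<bar>real_of_int (k$i)\<bar>)^2) summable_on UNIV"
proof -
  let ?g = "\<lambda>g::'n\<Rightarrow>int. \<Prod>i\<in>UNIV. 1 / (1 + \<bar>real_of_int (g i)\<bar>)^2"
  have "infsum ?g (PiE UNIV (\<lambda>_. UNIV)) = (\<Prod>i\<in>(UNIV::'n set). \<Sum>\<^sub>\<infinity>j::int. 1 / (1 + \<bar>real_of_int j\<bar>)^2)"
    by (rule infsum_prod_PiE_abs) (auto intro: summable_on_int_inverse_square)
  also have "\<dots> > 0"
  proof -
    have "(\<Sum>j\<in>{0::int}. 1 / (1 + \<bar>real_of_int j\<bar>)^2) \<le> (\<Sum>\<^sub>\<infinity>j::int. 1 / (1 + \<bar>real_of_int j\<bar>)^2)"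
      by (rule finite_sum_le_infsum[OF summable_on_int_inverse_square]) auto
    then show ?thesis by (simp add: prod_pos)
  qed
  finally have "?g summable_on UNIV"
    using infsum_not_exists by fastforce
  moreover have "range vec_nth = (UNIV :: ('n \<Rightarrow> int) set)"
    by (metis surj_def vec_lambda_inverse UNIV_I)
  ultimately have "(?g \<circ> vec_nth) summable_on UNIV"
    by (subst summable_on_reindex[symmetric]) (auto simp: inj_on_def vec_eq_iff)
  then show ?thesis by (simp add: o_def)
qed

lemma weight_inverse_power_summable:
  "(\<lambda>k::int^'n::finite. 1 / weight k ^ (2 * CARD('n))) summable_on UNIV"
proof (rule summable_on_comparison_test[OF summable_on_lattice_inverse_square])
  fix k :: "int^'n"
  have "(1 + \<bar>real_of_int (k$i)\<bar>)^2 \<le> weight k ^ 2" for i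
    using component_le_norm_cart[of "lat k" i] by (intro power_mono) (auto simp: weight_def lat_def)
  then have "(\<Prod>i\<in>UNIV. (1 + \<bar>real_of_int (k$i)\<bar>)^2) \<le> (\<Prod>i\<in>(UNIV::'n set). weight k ^ 2)"
    by (intro prod_mono) auto
  also have "\<dots> = weight k ^ (2 * CARD('n))"
    by (simp add: power_mult)
  finally have "1 / weight k ^ (2 * CARD('n)) \<le> 1 / (\<Prod>i\<in>UNIV. (1 + \<bar>real_of_int (k$i)\<bar>)^2)"
    using weight_pos[of k] by (intro divide_left_mono mult_pos_pos prod_pos) (auto simp: add_pos_nonneg)
  then show "1 / weight k ^ (2 * CARD('n)) \<le> (\<Prod>i\<in>UNIV. 1 / (1 + \<bar>real_of_int (k$i)\<bar>)^2)"
    by (simp add: prod_dividef)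
  show "0 \<le> 1 / weight k ^ (2 * CARD('n))"
    by simp
qed

definition wnorm :: "nat \<Rightarrow> (int^'n::finite \<Rightarrow> complex) \<Rightarrow> real" where
  "wnorm N u = (\<Sum>\<^sub>\<infinity>k. weight k ^ N * cmod (u k))"

definition rapid_decay :: "(int^'n::finite \<Rightarrow> complex) \<Rightarrow> bool" where
  "rapid_decay u \<longleftrightarrow> (\<forall>N. (\<lambda>k. weight k ^ N * cmod (u k)) summable_on UNIV)"

lemma rapid_decayD: "rapid_decay u \<Longrightarrow> (\<lambda>k. weight k ^ N * cmod (u k)) summable_on UNIV"
  by (simp add: rapid_decay_def)

lemma rapid_decay_abs_summable: "rapid_decay u \<Longrightarrow> (\<lambda>k. cmod (u k)) summable_on UNIV"
  using rapid_decayD[of u 0] by simp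

lemma wnorm_nonneg: "0 \<le> wnorm N u"
  unfolding wnorm_def by (rule infsum_nonneg) simp

lemma wnorm_0: "wnorm 0 u = (\<Sum>\<^sub>\<infinity>k. cmod (u k))"
  by (simp add: wnorm_def)

lemma weighted_le_wnorm:
  assumes "(\<lambda>k. weight k ^ N * cmod (u k)) summable_on UNIV"
  shows "weight k ^ N * cmod (u k) \<le> wnorm N u"
  using finite_sum_le_infsum[OF assms, of "{k}"] by (simp add: wnorm_def)

lemma cmod_le_wnorm_0: "rapid_decay u \<Longrightarrow> cmod (u k) \<le> wnorm 0 u"
  using weighted_le_wnorm[OF rapid_decayD[of u 0], of k] by simp

text \<open>Polynomial bounds and weighted \<open>\<ell>\<^sup>1\<close> bounds define the same Frechet space, because
  \<open>1 / weight k ^ (2 * CARD('n))\<close> is summable.\<close>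

lemma nct_smooth_iff_rapid_decay:
  fixes u :: "int^'n::finite \<Rightarrow> complex"
  shows "u \<in> nct_smooth \<longleftrightarrow> rapid_decay u"
proof
  assume u: "u \<in> nct_smooth"
  show "rapid_decay u"
    unfolding rapid_decay_def
  proof
    fix N
    obtain C where C: "\<And>k. weight k ^ (N + 2 * CARD('n)) * cmod (u k) \<le> C"
      using u unfolding nct_smooth_def weight_def by blast
    show "(\<lambda>k. weight k ^ N * cmod (u k)) summable_on UNIV"
    proof (rule summable_on_comparison_test[OF summable_on_cmult_right[OF weight_inverse_power_summable, of C]])
      fix k
      have "weight k ^ N * cmod (u k) * weight k ^ (2 * CARD('n)) \<le> C"
        using C[of k] by (simp add: power_add algebra_simps)
      then show "weight k ^ N * cmod (u k) \<le> C * (1 / weight k ^ (2 * CARD('n)))"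
        using weight_pos[of k] by (simp add: field_simps)
    qed simp
  qed
next
  assume "rapid_decay u"
  then show "u \<in> nct_smooth"
    unfolding nct_smooth_def using weighted_le_wnorm rapid_decayD
    by (fastforce simp: weight_def)
qed

lemma rapid_decay_nct_one: "rapid_decay nct_one"
  unfolding rapid_decay_def
proof
  fix N
  have "(\<lambda>k::int^'n. weight k ^ N * cmod (nct_one k)) summable_on {0}"
    by simp
  then show "(\<lambda>k::int^'n. weight k ^ N * cmod (nct_one k)) summable_on UNIV"
    by (rule summable_on_cong_neutral[THEN iffD1, rotated -1]) (auto simp: nct_one_def)
qed

lemma wnorm_nct_one: "wnorm N (nct_one :: int^'n::finite \<Rightarrow> complex) = 1"
proof -
  have "wnorm N (nct_one :: int^'n \<Rightarrow> complex) = (\<Sum>\<^sub>\<infinity>k::int^'n\<in>{0}. weight k ^ N * cmod (nct_one k))"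
    unfolding wnorm_def by (rule infsum_cong_neutral) (auto simp: nct_one_def)
  then show ?thesis
    by (simp add: nct_one_def)
qed

lemma rapid_decay_scale: "rapid_decay u \<Longrightarrow> rapid_decay (\<lambda>k. c * u k)"
  unfolding rapid_decay_def
  by (auto simp: norm_mult mult.left_commute intro: summable_on_cmult_right)

lemma wnorm_scale: "wnorm N (\<lambda>k. c * u k) = cmod c * wnorm N u"
  unfolding wnorm_def by (simp add: norm_mult mult.left_commute infsum_cmult_right')

lemma rapid_decay_add:
  assumes "rapid_decay u" "rapid_decay v"
  shows "rapid_decay (\<lambda>k. u k + v k)"
  unfolding rapid_decay_def
proof
  fix N
  have "(\<lambda>k. weight k ^ N * cmod (u k) + weight k ^ N * cmod (v k)) summable_on UNIV"
    using assms by (intro summable_on_add rapid_decayD)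
  then show "(\<lambda>k. weight k ^ N * cmod (u k + v k)) summable_on UNIV"
    by (rule summable_on_comparison_test)
       (auto simp flip: distrib_left intro!: mult_left_mono norm_triangle_ineq)
qed

lemma wnorm_add:
  assumes "rapid_decay u" "rapid_decay v"
  shows "wnorm N (\<lambda>k. u k + v k) \<le> wnorm N u + wnorm N v"
proof -
  have "wnorm N (\<lambda>k. u k + v k) \<le> (\<Sum>\<^sub>\<infinity>k. weight k ^ N * cmod (u k) + weight k ^ N * cmod (v k))"
    unfolding wnorm_def
    using assms rapid_decay_add[OF assms]
    by (intro infsum_mono summable_on_add rapid_decayD)
       (auto simp flip: distrib_left intro!: mult_left_mono norm_triangle_ineq)
  also have "\<dots> = wnorm N u + wnorm N v"
    unfolding wnorm_def using assms by (intro infsum_add rapid_decayD)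
  finally show ?thesis .
qed

lemma rapid_decay_diff:
  assumes "rapid_decay u" "rapid_decay v"
  shows "rapid_decay (\<lambda>k. u k - v k)"
  using rapid_decay_add[OF assms(1) rapid_decay_scale[OF assms(2), of "-1"]] by simp

lemma wnorm_diff:
  assumes "rapid_decay u" "rapid_decay v"
  shows "wnorm N (\<lambda>k. u k - v k) \<le> wnorm N u + wnorm N v"
  using wnorm_add[OF assms(1) rapid_decay_scale[OF assms(2)], of N "-1"] wnorm_scale[of N "-1" v]
  by simp

section \<open>The twisted convolution product\<close>

lemma norm_twist [simp]: "norm (twist \<theta> k l) = 1"
  by (simp add: twist_def)

lemma twist_zero [simp]: "twist \<theta> 0 l = 1" "twist \<theta> k 0 = 1"
  by (simp_all add: twist_def)

lemma twist_cocycle: "twist \<theta> k l * twist \<theta> (k + l) r = twist \<theta> l r * twist \<theta> k (l + r)"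
  by (simp add: twist_def cis_mult algebra_simps sum.distrib)

lemma has_sum_product_nonneg:
  fixes a :: "'a \<Rightarrow> real" and b :: "'b \<Rightarrow> real"
  assumes "\<And>k. 0 \<le> a k" "\<And>l. 0 \<le> b l" "a summable_on UNIV" "b summable_on UNIV"
  shows "((\<lambda>(k, l). a k * b l) has_sum (infsum a UNIV * infsum b UNIV)) UNIV"
proof -
  have rows: "((\<lambda>l. a k * b l) has_sum a k * infsum b UNIV) UNIV" for k
    using has_sum_cmult_right[OF has_sum_infsum[OF assms(4)]] by simp
  have total: "((\<lambda>k. a k * infsum b UNIV) has_sum (infsum a UNIV * infsum b UNIV)) UNIV"
    using has_sum_cmult_left[OF has_sum_infsum[OF assms(3)]] by simp
  have "(\<lambda>(k, l). a k * b l) summable_on Sigma UNIV (\<lambda>_. UNIV)"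
    using rows total assms(1,2)
    by (intro summable_on_SigmaI[where g="\<lambda>k. a k * infsum b UNIV"]) (auto intro: has_sum_imp_summable)
  from has_sum_SigmaI[OF _ total this] rows show ?thesis
    by simp
qed

lemma has_sum_convolution_reindex:
  fixes F :: "'a::ab_group_add \<Rightarrow> 'a \<Rightarrow> 'b::{comm_monoid_add,topological_space}"
  shows "((\<lambda>(m, k). F k (m - k)) has_sum S) UNIV \<longleftrightarrow> ((\<lambda>(k, l). F k l) has_sum S) UNIV"
  by (rule has_sum_reindex_bij_witness[where i="\<lambda>(k, l). (k + l, k)" and j="\<lambda>(m, k). (k, m - k)"]) auto

lemma nct_mult_term_abs_summable:
  assumes "rapid_decay u" "rapid_decay v"
  shows "(\<lambda>k. cmod (u k * v (m - k) * twist \<theta> k (m - k))) summable_on UNIV"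
proof (rule summable_on_comparison_test[OF summable_on_cmult_left[OF rapid_decay_abs_summable[OF assms(1)]]])
  show "cmod (u k * v (m - k) * twist \<theta> k (m - k)) \<le> cmod (u k) * wnorm 0 v" for k
    using cmod_le_wnorm_0[OF assms(2)] by (simp add: norm_mult mult_left_mono)
qed simp

lemma weighted_product_summable:
  assumes "rapid_decay u" "rapid_decay v"
  shows "(\<lambda>(k, l). weight (k + l) ^ N * (cmod (u k) * cmod (v l))) summable_on UNIV"
proof (rule summable_on_comparison_test)
  show "(\<lambda>(k, l). (weight k ^ N * cmod (u k)) * (weight l ^ N * cmod (v l))) summable_on UNIV"
    using assms by (intro has_sum_imp_summable[OF has_sum_product_nonneg] rapid_decayD) auto
  show "(case x of (k, l) \<Rightarrow> weight (k + l) ^ N * (cmod (u k) * cmod (v l)))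
      \<le> (case x of (k, l) \<Rightarrow> (weight k ^ N * cmod (u k)) * (weight l ^ N * cmod (v l)))" for x
    using mult_right_mono[OF weight_power_add_le[of "fst x" "snd x" N], of "cmod (u (fst x)) * cmod (v (snd x))"]
    by (auto simp: case_prod_beta algebra_simps)
qed (auto simp: case_prod_beta)

lemma nct_mult_weighted_bound:
  assumes "rapid_decay u" "rapid_decay v"
  shows "(\<lambda>m. weight m ^ N * cmod (nct_mult \<theta> u v m)) summable_on UNIV
    \<and> wnorm N (nct_mult \<theta> u v) \<le> (\<Sum>\<^sub>\<infinity>(k, l). weight (k + l) ^ N * (cmod (u k) * cmod (v l)))"
proof -
  define G where "G = (\<lambda>(k, l). weight (k + l) ^ N * (cmod (u k) * cmod (v l)))"
  define H where "H m k = weight m ^ N * (cmod (u k) * cmod (v (m - k)))" for m k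
  have "((\<lambda>(k, l). G (k, l)) has_sum infsum G UNIV) UNIV"
    using weighted_product_summable[OF assms] by (simp add: G_def)
  then have "((\<lambda>(m, k). G (k, m - k)) has_sum infsum G UNIV) UNIV"
    by (rule has_sum_convolution_reindex[where F="\<lambda>k l. G (k, l)", THEN iffD2])
  then have H_sum: "((\<lambda>(m, k). H m k) has_sum infsum G UNIV) (Sigma UNIV (\<lambda>_. UNIV))"
    by (simp add: G_def H_def)
  have rows: "H m summable_on UNIV" for m
    using summable_on_SigmaD1[OF has_sum_imp_summable[OF H_sum]] by simp
  have cols: "(\<lambda>m. infsum (H m) UNIV) summable_on UNIV"
    using summable_on_SigmaD[OF has_sum_imp_summable[OF H_sum]] rows by simp
  have cols_sum: "(\<Sum>\<^sub>\<infinity>m. infsum (H m) UNIV) = infsum G UNIV"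
    using infsum_Sigma'_banach[OF has_sum_imp_summable[OF H_sum]] infsumI[OF H_sum] by simp
  have pointwise: "weight m ^ N * cmod (nct_mult \<theta> u v m) \<le> infsum (H m) UNIV" for m
  proof -
    have "cmod (nct_mult \<theta> u v m) \<le> (\<Sum>\<^sub>\<infinity>k. cmod (u k * v (m - k) * twist \<theta> k (m - k)))"
      unfolding nct_mult_def by (rule norm_infsum_bound[OF nct_mult_term_abs_summable[OF assms]])
    then have "weight m ^ N * cmod (nct_mult \<theta> u v m)
        \<le> (\<Sum>\<^sub>\<infinity>k. weight m ^ N * cmod (u k * v (m - k) * twist \<theta> k (m - k)))"
      by (simp add: infsum_cmult_right' mult_left_mono)
    then show ?thesis
      by (simp add: H_def[abs_def] norm_mult)
  qed
  have summable: "(\<lambda>m. weight m ^ N * cmod (nct_mult \<theta> u v m)) summable_on UNIV"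
    by (rule summable_on_comparison_test[OF cols pointwise]) simp
  have "wnorm N (nct_mult \<theta> u v) \<le> (\<Sum>\<^sub>\<infinity>m. infsum (H m) UNIV)"
    unfolding wnorm_def by (rule infsum_mono[OF summable cols pointwise])
  with summable cols_sum show ?thesis
    by (simp add: G_def)
qed

lemma rapid_decay_nct_mult:
  "rapid_decay u \<Longrightarrow> rapid_decay v \<Longrightarrow> rapid_decay (nct_mult \<theta> u v)"
  using nct_mult_weighted_bound unfolding rapid_decay_def by blast

lemma wnorm_nct_mult_le:
  assumes "rapid_decay u" "rapid_decay v"
  shows "wnorm N (nct_mult \<theta> u v) \<le> wnorm N u * wnorm N v"
proof -
  have product: "((\<lambda>(k, l). (weight k ^ N * cmod (u k)) * (weight l ^ N * cmod (v l)))
      has_sum (wnorm N u * wnorm N v)) UNIV"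
    unfolding wnorm_def using assms by (intro has_sum_product_nonneg rapid_decayD) auto
  have "wnorm N (nct_mult \<theta> u v) \<le> (\<Sum>\<^sub>\<infinity>(k, l). weight (k + l) ^ N * (cmod (u k) * cmod (v l)))"
    using nct_mult_weighted_bound[OF assms] by blast
  also have "\<dots> \<le> (\<Sum>\<^sub>\<infinity>(k, l). (weight k ^ N * cmod (u k)) * (weight l ^ N * cmod (v l)))"
    by (intro infsum_mono weighted_product_summable[OF assms] has_sum_imp_summable[OF product])
       (auto simp: algebra_simps mult_left_mono weight_power_add_le)
  also have "\<dots> = wnorm N u * wnorm N v"
    using product by (rule infsumI)
  finally show ?thesis .
qed

lemma nct_mult_one_left [simp]: "nct_mult \<theta> nct_one v = v"
proof
  fix m
  have "nct_mult \<theta> nct_one v m = (\<Sum>\<^sub>\<infinity>k\<in>{0}. nct_one k * v (m - k) * twist \<theta> k (m - k))"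
    unfolding nct_mult_def by (rule infsum_cong_neutral) (auto simp: nct_one_def)
  then show "nct_mult \<theta> nct_one v m = v m"
    by (simp add: nct_one_def)
qed

lemma nct_mult_one_right [simp]: "nct_mult \<theta> v nct_one = v"
proof
  fix m
  have "nct_mult \<theta> v nct_one m = (\<Sum>\<^sub>\<infinity>k\<in>{m}. v k * nct_one (m - k) * twist \<theta> k (m - k))"
    unfolding nct_mult_def by (rule infsum_cong_neutral) (auto simp: nct_one_def)
  then show "nct_mult \<theta> v nct_one m = v m"
    by (simp add: nct_one_def)
qed

lemma nct_mult_scale_left: "nct_mult \<theta> (\<lambda>k. c * u k) v = (\<lambda>m. c * nct_mult \<theta> u v m)"
  unfolding nct_mult_def by (simp add: mult.assoc infsum_cmult_right')

lemma nct_mult_scale_right: "nct_mult \<theta> u (\<lambda>k. c * v k) = (\<lambda>m. c * nct_mult \<theta> u v m)"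
  unfolding nct_mult_def by (subst infsum_cmult_right'[symmetric]) (simp add: algebra_simps)

lemma infsum_diff:
  fixes f g :: "'a \<Rightarrow> 'b::{topological_ab_group_add, t2_space}"
  assumes "f summable_on A" "g summable_on A"
  shows "infsum (\<lambda>x. f x - g x) A = infsum f A - infsum g A"
  using infsum_add[OF assms(1) summable_on_uminus[THEN iffD2, OF assms(2)]]
  by (simp add: infsum_uminus)

lemma nct_mult_diff_left:
  assumes "rapid_decay u" "rapid_decay u'" "rapid_decay v"
  shows "nct_mult \<theta> (\<lambda>k. u k - u' k) v = (\<lambda>m. nct_mult \<theta> u v m - nct_mult \<theta> u' v m)"
proof
  fix m
  show "nct_mult \<theta> (\<lambda>k. u k - u' k) v m = nct_mult \<theta> u v m - nct_mult \<theta> u' v m"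
    unfolding nct_mult_def left_diff_distrib
    using assms by (intro infsum_diff abs_summable_summable[OF nct_mult_term_abs_summable])
qed

lemma nct_mult_diff_right:
  assumes "rapid_decay u" "rapid_decay v" "rapid_decay v'"
  shows "nct_mult \<theta> u (\<lambda>k. v k - v' k) = (\<lambda>m. nct_mult \<theta> u v m - nct_mult \<theta> u v' m)"
proof
  fix m
  show "nct_mult \<theta> u (\<lambda>k. v k - v' k) m = nct_mult \<theta> u v m - nct_mult \<theta> u v' m"
    unfolding nct_mult_def left_diff_distrib right_diff_distrib
    using assms by (intro infsum_diff abs_summable_summable[OF nct_mult_term_abs_summable])
qed

lemma nct_mult_assoc:
  assumes u: "rapid_decay u" and v: "rapid_decay v" and w: "rapid_decay w"
  shows "nct_mult \<theta> (nct_mult \<theta> u v) w = nct_mult \<theta> u (nct_mult \<theta> v w)"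
proof
  fix m
  define S where "S k l = u k * v l * w (m - k - l) * (twist \<theta> l (m - k - l) * twist \<theta> k (m - k))" for k l
  define F where "F j k = u k * v (j - k) * twist \<theta> k (j - k) * w (m - j) * twist \<theta> j (m - j)" for j k
  have F_S: "F j k = S k (j - k)" for j k
    using twist_cocycle[of \<theta> k "j - k" "m - j"] by (simp add: F_def S_def algebra_simps)
  have "(\<lambda>(k, l). cmod (u k) * cmod (v l)) summable_on UNIV"
    using u v by (intro has_sum_imp_summable[OF has_sum_product_nonneg] rapid_decay_abs_summable) auto
  then have S_abs: "(\<lambda>(k, l). cmod (S k l)) summable_on UNIV"
  proof (rule summable_on_comparison_test[OF summable_on_cmult_right[where c="wnorm 0 w"]])
    show "(case x of (k, l) \<Rightarrow> cmod (S k l)) \<le> wnorm 0 w * (case x of (k, l) \<Rightarrow> cmod (u k) * cmod (v l))" for x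
    proof (cases x)
      case (Pair k l)
      have "cmod (w (m - k - l)) * (cmod (u k) * cmod (v l)) \<le> wnorm 0 w * (cmod (u k) * cmod (v l))"
        by (rule mult_right_mono[OF cmod_le_wnorm_0[OF w]]) simp
      then show ?thesis
        by (simp add: Pair S_def norm_mult mult_ac)
    qed
  qed auto
  have S_summable: "(\<lambda>(k, l). S k l) summable_on UNIV"
    by (rule abs_summable_summable) (use S_abs in \<open>simp add: case_prod_unfold\<close>)
  then have F_has_sum: "((\<lambda>(j, k). F j k) has_sum (\<Sum>\<^sub>\<infinity>(k, l). S k l)) UNIV"
    unfolding F_S by (intro has_sum_convolution_reindex[where F=S, THEN iffD2] has_sum_infsum)
  have "nct_mult \<theta> (nct_mult \<theta> u v) w m = (\<Sum>\<^sub>\<infinity>j. \<Sum>\<^sub>\<infinity>k. F j k)"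
    unfolding nct_mult_def F_def
    by (rule infsum_cong) (simp add: infsum_cmult_left'[symmetric] mult.assoc)
  also have "\<dots> = (\<Sum>\<^sub>\<infinity>(j, k). F j k)"
    using infsum_Sigma'_banach[of F UNIV "\<lambda>_. UNIV"] has_sum_imp_summable[OF F_has_sum] by simp
  also have "\<dots> = (\<Sum>\<^sub>\<infinity>(k, l). S k l)"
    using F_has_sum by (rule infsumI)
  also have "\<dots> = (\<Sum>\<^sub>\<infinity>k. \<Sum>\<^sub>\<infinity>l. S k l)"
    using infsum_Sigma'_banach[of S UNIV "\<lambda>_. UNIV"] S_summable by simp
  also have "\<dots> = nct_mult \<theta> u (nct_mult \<theta> v w) m"
    unfolding nct_mult_def
  proof (rule infsum_cong)
    fix k
    have "(\<Sum>\<^sub>\<infinity>l. S k l) = (\<Sum>\<^sub>\<infinity>l. u k * (v l * w (m - k - l) * twist \<theta> l (m - k - l)) * twist \<theta> k (m - k))"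
      by (rule infsum_cong) (simp add: S_def algebra_simps)
    then show "(\<Sum>\<^sub>\<infinity>l. S k l) = u k * (\<Sum>\<^sub>\<infinity>l. v l * w (m - k - l) * twist \<theta> l (m - k - l)) * twist \<theta> k (m - k)"
      by (simp add: infsum_cmult_left' infsum_cmult_right')
  qed
  finally show "nct_mult \<theta> (nct_mult \<theta> u v) w m = nct_mult \<theta> u (nct_mult \<theta> v w) m" .
qed

section \<open>Powers and the Neumann series\<close>

definition nct_power :: "real^'n::{finite,linorder}^'n::{finite,linorder} \<Rightarrow> (int^'n::{finite,linorder} \<Rightarrow> complex)
    \<Rightarrow> nat \<Rightarrow> int^'n::{finite,linorder} \<Rightarrow> complex" where
  "nct_power \<theta> d n = (nct_mult \<theta> d ^^ n) nct_one"

lemma nct_power_0 [simp]: "nct_power \<theta> d 0 = nct_one"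
  by (simp add: nct_power_def)

lemma nct_power_Suc: "nct_power \<theta> d (Suc n) = nct_mult \<theta> d (nct_power \<theta> d n)"
  by (simp add: nct_power_def)

lemma rapid_decay_nct_power: "rapid_decay d \<Longrightarrow> rapid_decay (nct_power \<theta> d n)"
  by (induction n) (auto simp: nct_power_Suc rapid_decay_nct_one rapid_decay_nct_mult)

lemma wnorm_nct_power_le: "rapid_decay d \<Longrightarrow> wnorm N (nct_power \<theta> d n) \<le> wnorm N d ^ n"
proof (induction n)
  case (Suc n)
  have "wnorm N (nct_power \<theta> d (Suc n)) \<le> wnorm N d * wnorm N (nct_power \<theta> d n)"
    unfolding nct_power_Suc using Suc.prems by (intro wnorm_nct_mult_le rapid_decay_nct_power)
  also have "\<dots> \<le> wnorm N d * wnorm N d ^ n"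
    using Suc by (intro mult_left_mono) (auto simp: wnorm_nonneg)
  finally show ?case
    by simp
qed (simp add: wnorm_nct_one)

lemma nct_power_Suc_right:
  "rapid_decay d \<Longrightarrow> nct_mult \<theta> (nct_power \<theta> d n) d = nct_power \<theta> d (Suc n)"
proof (induction n)
  case (Suc n)
  then show ?case
    by (simp add: nct_power_Suc nct_mult_assoc rapid_decay_nct_power)
qed (simp add: nct_power_Suc)

lemma power_add_le_convex_split:
  fixes a b r :: real
  assumes "0 \<le> a" "0 \<le> b" "1 \<le> r"
  shows "(a + b) ^ N \<le> (r + 1) ^ N * (1 / (r + 1) * a ^ N + r / (r + 1) * (b / r) ^ N)"
proof -
  define t where "t = r / (r + 1)"
  have t: "0 \<le> t" "t \<le> 1" "1 - t = 1 / (r + 1)"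
    using assms by (auto simp: t_def field_simps)
  have "convex_on {0..} (\<lambda>x::real. x ^ N)"
    by (cases "even N") (auto intro: convex_power_even convex_power_odd convex_on_subset)
  then have "((1 - t) *\<^sub>R a + t *\<^sub>R (b / r)) ^ N \<le> (1 - t) * a ^ N + t * (b / r) ^ N"
    using assms t by (intro convex_onD) auto
  moreover have "(1 - t) *\<^sub>R a + t *\<^sub>R (b / r) = (a + b) / (r + 1)"
    unfolding t(3) using assms by (simp add: t_def add_divide_distrib)
  ultimately have "((a + b) / (r + 1)) ^ N \<le> 1 / (r + 1) * a ^ N + r / (r + 1) * (b / r) ^ N"
    unfolding t(3) by (simp add: t_def)
  then show ?thesis
    using assms by (simp add: power_divide field_simps)
qed

lemma wnorm_nct_mult_le_split:
  fixes u v :: "int^'n::{finite,linorder} \<Rightarrow> complex"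
  assumes u: "rapid_decay u" and v: "rapid_decay v" and "0 \<le> c1" "0 \<le> c2"
    and split: "\<And>k l :: int^'n::{finite,linorder}. weight (k + l) ^ N \<le> c1 * weight k ^ N + c2 * weight l ^ N"
  shows "wnorm N (nct_mult \<theta> u v) \<le> c1 * (wnorm N u * wnorm 0 v) + c2 * (wnorm 0 u * wnorm N v)"
proof -
  have "((\<lambda>(k, l). (weight k ^ N * cmod (u k)) * (weight l ^ 0 * cmod (v l))) has_sum (wnorm N u * wnorm 0 v)) UNIV"
    and "((\<lambda>(k, l). (weight k ^ 0 * cmod (u k)) * (weight l ^ N * cmod (v l))) has_sum (wnorm 0 u * wnorm N v)) UNIV"
    unfolding wnorm_def using u v by (intro has_sum_product_nonneg rapid_decayD; simp)+
  from has_sum_add[OF has_sum_cmult_right[OF this(1), of c1] has_sum_cmult_right[OF this(2), of c2]]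
  have bound: "((\<lambda>(k, l). c1 * (weight k ^ N * cmod (u k) * cmod (v l)) + c2 * (cmod (u k) * (weight l ^ N * cmod (v l))))
      has_sum (c1 * (wnorm N u * wnorm 0 v) + c2 * (wnorm 0 u * wnorm N v))) UNIV"
    by (simp add: case_prod_unfold)
  have "wnorm N (nct_mult \<theta> u v) \<le> (\<Sum>\<^sub>\<infinity>(k, l). weight (k + l) ^ N * (cmod (u k) * cmod (v l)))"
    using nct_mult_weighted_bound[OF u v] by blast
  also have "\<dots> \<le> (\<Sum>\<^sub>\<infinity>(k, l). c1 * (weight k ^ N * cmod (u k) * cmod (v l)) + c2 * (cmod (u k) * (weight l ^ N * cmod (v l))))"
  proof (rule infsum_mono[OF weighted_product_summable[OF u v] has_sum_imp_summable[OF bound]])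
    show "(case x of (k, l) \<Rightarrow> weight (k + l) ^ N * (cmod (u k) * cmod (v l)))
        \<le> (case x of (k, l) \<Rightarrow> c1 * (weight k ^ N * cmod (u k) * cmod (v l)) + c2 * (cmod (u k) * (weight l ^ N * cmod (v l))))" for x
      using mult_right_mono[OF split[of "fst x" "snd x"], of "cmod (u (fst x)) * cmod (v (snd x))"]
      by (simp add: case_prod_beta algebra_simps)
  qed
  also have "\<dots> = c1 * (wnorm N u * wnorm 0 v) + c2 * (wnorm 0 u * wnorm N v)"
    using bound by (rule infsumI)
  finally show ?thesis .
qed

lemma wnorm_nct_power_le_poly:
  assumes d: "rapid_decay d" and "1 \<le> n"
  shows "wnorm N (nct_power \<theta> d n) \<le> real n ^ (N + 1) * wnorm N d * wnorm 0 d ^ (n - 1)"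
  using \<open>1 \<le> n\<close>
proof (induction n rule: dec_induct)
  case (step n)
  define r where "r = real n"
  define c1 where "c1 = (r + 1) ^ N / (r + 1)"
  define c2 where "c2 = c1 * r / r ^ N"
  have r: "1 \<le> r"
    using step by (simp add: r_def)
  have c: "0 \<le> c1" "0 \<le> c2"
    using r by (auto simp: c1_def c2_def)
  have split: "weight (k + l) ^ N \<le> c1 * weight k ^ N + c2 * weight l ^ N" for k l
  proof -
    have "weight (k + l) ^ N \<le> (weight k + weight l) ^ N"
      using weight_pos[of "k + l"] by (intro power_mono weight_add_le) simp
    also have "\<dots> \<le> (r + 1) ^ N * (1 / (r + 1) * weight k ^ N + r / (r + 1) * (weight l / r) ^ N)"
      using r weight_pos[of k] weight_pos[of l] by (intro power_add_le_convex_split) auto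
    also have "\<dots> = c1 * weight k ^ N + c2 * weight l ^ N"
      by (simp add: c1_def c2_def power_divide algebra_simps)
    finally show ?thesis .
  qed
  let ?A = "wnorm N d" and ?y = "wnorm 0 d" and ?p = "nct_power \<theta> d n"
  have "wnorm N (nct_power \<theta> d (Suc n)) \<le> c1 * (?A * wnorm 0 ?p) + c2 * (?y * wnorm N ?p)"
    unfolding nct_power_Suc by (rule wnorm_nct_mult_le_split[OF d rapid_decay_nct_power[OF d] c split])
  also have "\<dots> \<le> c1 * (?A * ?y ^ n) + c2 * (?y * (r ^ (N + 1) * ?A * ?y ^ (n - 1)))"
    using c step.IH wnorm_nct_power_le[OF d, of 0 \<theta> n]
    by (intro add_mono mult_left_mono) (auto simp: r_def wnorm_nonneg)
  also have "\<dots> = ?A * ?y ^ n * (c1 + c2 * r ^ (N + 1))"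
    using \<open>1 \<le> n\<close> by (cases n) (auto simp: algebra_simps)
  also have "\<dots> \<le> ?A * ?y ^ n * (r + 1) ^ (N + 1)"
  proof (rule mult_left_mono)
    have "c2 * r ^ (N + 1) = c1 * (r * r)"
      using r by (simp add: c2_def)
    then have "c1 + c2 * r ^ (N + 1) = c1 * (1 + r * r)"
      by (simp add: algebra_simps)
    also have "\<dots> \<le> c1 * ((r + 1) * (r + 1))"
      using r c by (intro mult_left_mono) (auto simp: algebra_simps)
    also have "\<dots> = (r + 1) ^ (N + 1)"
      using r by (simp add: c1_def)
    finally show "c1 + c2 * r ^ (N + 1) \<le> (r + 1) ^ (N + 1)" .
  qed (simp add: wnorm_nonneg)
  finally show ?case
    by (simp add: r_def algebra_simps)
qed (simp add: nct_power_Suc)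

lemma root_Suc_tendsto_1: "(\<lambda>n. root n (real (Suc n))) \<longlonglongrightarrow> 1"
proof (rule tendsto_sandwich[where f="\<lambda>_. 1" and h="\<lambda>n. root n 2 * root n (real n)"])
  show "\<forall>\<^sub>F n in sequentially. 1 \<le> root n (real (Suc n))"
    using eventually_gt_at_top[of "0::nat"] by eventually_elim auto
  show "\<forall>\<^sub>F n in sequentially. root n (real (Suc n)) \<le> root n 2 * root n (real n)"
    using eventually_gt_at_top[of "0::nat"]
    by eventually_elim (auto simp flip: real_root_mult intro: real_root_le_mono)
  show "(\<lambda>n. root n 2 * root n (real n)) \<longlonglongrightarrow> 1"
    using tendsto_mult[OF LIMSEQ_root_const[of 2] LIMSEQ_root] by simp
qed simp

lemma summable_poly_times_geometric:
  fixes y B :: real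
  assumes "0 \<le> y" "y < 1" "0 < B"
  shows "summable (\<lambda>n. real (Suc n) ^ p * B * y ^ n)"
proof (rule root_test_convergence)
  have "(\<lambda>n. root n (real (Suc n)) ^ p * root n B * y) \<longlonglongrightarrow> 1 ^ p * 1 * y"
    by (intro tendsto_intros root_Suc_tendsto_1 LIMSEQ_root_const assms)
  moreover have "\<forall>\<^sub>F n in sequentially.
      root n (real (Suc n)) ^ p * root n B * y = root n (norm (real (Suc n) ^ p * B * y ^ n))"
    using eventually_gt_at_top[of "0::nat"]
    by eventually_elim (use assms in \<open>simp add: real_root_mult abs_mult real_root_power real_root_power_cancel\<close>)
  ultimately show "(\<lambda>n. root n (norm (real (Suc n) ^ p * B * y ^ n))) \<longlonglongrightarrow> y"
    by (simp add: tendsto_cong)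
qed (use assms in simp)

lemma wnorm_nct_power_summable:
  assumes d: "rapid_decay d" and small: "wnorm 0 d < 1"
  shows "(\<lambda>n. wnorm N (nct_power \<theta> d n)) summable_on UNIV"
proof -
  have "summable (\<lambda>n. real (Suc n) ^ (N + 1) * (wnorm N d + 1) * wnorm 0 d ^ n)"
    using small by (intro summable_poly_times_geometric) (auto simp: wnorm_nonneg add_nonneg_pos)
  then have "summable (\<lambda>n. wnorm N (nct_power \<theta> d (Suc n)))"
  proof (rule summable_comparison_test')
    fix n
    have "wnorm N (nct_power \<theta> d (Suc n)) \<le> real (Suc n) ^ (N + 1) * wnorm N d * wnorm 0 d ^ n"
      using wnorm_nct_power_le_poly[OF d, of "Suc n" N \<theta>] by simp
    also have "\<dots> \<le> real (Suc n) ^ (N + 1) * (wnorm N d + 1) * wnorm 0 d ^ n"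
      by (intro mult_right_mono mult_left_mono) (auto simp: wnorm_nonneg)
    finally show "norm (wnorm N (nct_power \<theta> d (Suc n))) \<le> real (Suc n) ^ (N + 1) * (wnorm N d + 1) * wnorm 0 d ^ n"
      by (simp add: wnorm_nonneg)
  qed
  then have "summable (\<lambda>n. wnorm N (nct_power \<theta> d n))"
    by (subst (asm) summable_Suc_iff)
  then show ?thesis
    by (subst summable_on_UNIV_nonneg_real_iff) (auto simp: wnorm_nonneg)
qed

lemma rapid_decay_infsum:
  assumes q: "\<And>n. rapid_decay (q n)" and qs: "\<And>N. (\<lambda>n. wnorm N (q n)) summable_on UNIV"
  shows "(\<lambda>m. weight m ^ N * cmod (\<Sum>\<^sub>\<infinity>n. q n m)) summable_on UNIV
    \<and> wnorm N (\<lambda>m. \<Sum>\<^sub>\<infinity>n. q n m) \<le> (\<Sum>\<^sub>\<infinity>n. wnorm N (q n))"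
proof -
  have "((\<lambda>m. weight m ^ N * cmod (q n m)) has_sum wnorm N (q n)) UNIV" for n
    unfolding wnorm_def by (rule has_sum_infsum[OF rapid_decayD[OF q]])
  then have "(\<lambda>(n, m). weight m ^ N * cmod (q n m)) summable_on Sigma UNIV (\<lambda>_. UNIV)"
    by (intro summable_on_SigmaI[OF _ qs[of N]]) auto
  then have swapped: "(\<lambda>(m, n). weight m ^ N * cmod (q n m)) summable_on Sigma UNIV (\<lambda>_. UNIV)"
    by (subst summable_on_swap) (simp add: case_prod_unfold)
  have rows: "(\<lambda>n. weight m ^ N * cmod (q n m)) summable_on UNIV" for m
    using summable_on_SigmaD1[OF swapped] by simp
  have cols: "(\<lambda>m. \<Sum>\<^sub>\<infinity>n. weight m ^ N * cmod (q n m)) summable_on UNIV"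
    using summable_on_SigmaD[OF swapped] rows by simp
  have pointwise: "weight m ^ N * cmod (\<Sum>\<^sub>\<infinity>n. q n m) \<le> (\<Sum>\<^sub>\<infinity>n. weight m ^ N * cmod (q n m))" for m
  proof -
    have "(\<lambda>n. cmod (q n m)) summable_on UNIV"
      by (rule summable_on_comparison_test[OF qs[of 0]]) (auto intro: cmod_le_wnorm_0 q)
    then have "cmod (\<Sum>\<^sub>\<infinity>n. q n m) \<le> (\<Sum>\<^sub>\<infinity>n. cmod (q n m))"
      by (rule norm_infsum_bound)
    then show ?thesis
      by (simp add: infsum_cmult_right' mult_left_mono)
  qed
  have summable: "(\<lambda>m. weight m ^ N * cmod (\<Sum>\<^sub>\<infinity>n. q n m)) summable_on UNIV"
    by (rule summable_on_comparison_test[OF cols pointwise]) simp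
  have "wnorm N (\<lambda>m. \<Sum>\<^sub>\<infinity>n. q n m) \<le> (\<Sum>\<^sub>\<infinity>m. \<Sum>\<^sub>\<infinity>n. weight m ^ N * cmod (q n m))"
    unfolding wnorm_def by (rule infsum_mono[OF summable cols pointwise])
  also have "\<dots> = (\<Sum>\<^sub>\<infinity>n. wnorm N (q n))"
    unfolding wnorm_def using swapped by (intro infsum_swap_banach) simp
  finally show ?thesis
    using summable by blast
qed

lemma nct_mult_infsum_right:
  assumes e: "rapid_decay e" and q: "\<And>n. rapid_decay (q n)" and qs: "(\<lambda>n. wnorm 0 (q n)) summable_on UNIV"
  shows "nct_mult \<theta> e (\<lambda>m. \<Sum>\<^sub>\<infinity>n. q n m) = (\<lambda>m. \<Sum>\<^sub>\<infinity>n. nct_mult \<theta> e (q n) m)"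
proof
  fix m
  have "(\<lambda>(k, n). cmod (e k) * wnorm 0 (q n)) summable_on UNIV"
    using e qs by (intro has_sum_imp_summable[OF has_sum_product_nonneg] rapid_decay_abs_summable)
       (auto simp: wnorm_nonneg)
  then have abs: "(\<lambda>(k, n). cmod (e k * q n (m - k) * twist \<theta> k (m - k))) summable_on UNIV"
    by (rule summable_on_comparison_test)
       (auto simp: norm_mult intro!: mult_left_mono cmod_le_wnorm_0 q)
  have "(\<lambda>(k, n). e k * q n (m - k) * twist \<theta> k (m - k)) summable_on UNIV"
    by (rule abs_summable_summable) (use abs in \<open>simp add: case_prod_unfold\<close>)
  then have "(\<Sum>\<^sub>\<infinity>k. \<Sum>\<^sub>\<infinity>n. e k * q n (m - k) * twist \<theta> k (m - k))
      = (\<Sum>\<^sub>\<infinity>n. \<Sum>\<^sub>\<infinity>k. e k * q n (m - k) * twist \<theta> k (m - k))"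
    by (intro infsum_swap_banach) simp
  then show "nct_mult \<theta> e (\<lambda>m. \<Sum>\<^sub>\<infinity>n. q n m) m = (\<Sum>\<^sub>\<infinity>n. nct_mult \<theta> e (q n) m)"
    by (simp add: nct_mult_def infsum_cmult_left' infsum_cmult_right')
qed

lemma nct_mult_infsum_left:
  assumes e: "rapid_decay e" and q: "\<And>n. rapid_decay (q n)" and qs: "(\<lambda>n. wnorm 0 (q n)) summable_on UNIV"
  shows "nct_mult \<theta> (\<lambda>m. \<Sum>\<^sub>\<infinity>n. q n m) e = (\<lambda>m. \<Sum>\<^sub>\<infinity>n. nct_mult \<theta> (q n) e m)"
proof
  fix m
  have "((\<lambda>k. cmod (q n k) * wnorm 0 e) has_sum wnorm 0 (q n) * wnorm 0 e) UNIV" for n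
    unfolding wnorm_0 by (intro has_sum_cmult_left has_sum_infsum rapid_decay_abs_summable q)
  then have "(\<lambda>(n, k). cmod (q n k) * wnorm 0 e) summable_on Sigma UNIV (\<lambda>_. UNIV)"
    by (intro summable_on_SigmaI[OF _ summable_on_cmult_left[OF qs]]) (auto simp: wnorm_nonneg)
  then have "(\<lambda>(n, k). cmod (q n k) * wnorm 0 e) summable_on UNIV"
    by simp
  then have abs: "(\<lambda>(n, k). cmod (q n k * e (m - k) * twist \<theta> k (m - k))) summable_on UNIV"
    by (rule summable_on_comparison_test)
       (auto simp: norm_mult intro!: mult_left_mono cmod_le_wnorm_0 e)
  have "(\<lambda>(n, k). q n k * e (m - k) * twist \<theta> k (m - k)) summable_on UNIV"
    by (rule abs_summable_summable) (use abs in \<open>simp add: case_prod_unfold\<close>)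
  then have "(\<Sum>\<^sub>\<infinity>k. \<Sum>\<^sub>\<infinity>n. q n k * e (m - k) * twist \<theta> k (m - k))
      = (\<Sum>\<^sub>\<infinity>n. \<Sum>\<^sub>\<infinity>k. q n k * e (m - k) * twist \<theta> k (m - k))"
    by (subst infsum_swap_banach) (simp_all add: summable_on_swap[of _ UNIV UNIV] case_prod_unfold)
  then show "nct_mult \<theta> (\<lambda>m. \<Sum>\<^sub>\<infinity>n. q n m) e m = (\<Sum>\<^sub>\<infinity>n. nct_mult \<theta> (q n) e m)"
    by (simp add: nct_mult_def infsum_cmult_left')
qed

lemma infsum_nat_split_head:
  fixes f :: "nat \<Rightarrow> 'a::banach"
  assumes "f summable_on UNIV"
  shows "infsum f UNIV = f 0 + infsum (\<lambda>n. f (Suc n)) UNIV"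
proof -
  have "f summable_on range Suc"
    by (rule summable_on_subset_banach[OF assms]) auto
  then have "(\<lambda>n. f (Suc n)) summable_on UNIV"
    by (subst (asm) summable_on_reindex) (auto simp: o_def)
  then have "infsum (\<lambda>n. f (Suc n)) UNIV = (\<Sum>n. f (Suc n))"
    by (metis has_sum_imp_sums has_sum_infsum sums_unique)
  moreover have "infsum f UNIV = suminf f"
    using assms by (metis has_sum_imp_sums has_sum_infsum sums_unique)
  ultimately show ?thesis
    using suminf_split_head[OF summable_on_imp_summable[OF assms]] by simp
qed

lemma wnorm_nct_power_series_le:
  assumes d: "rapid_decay d" and small: "wnorm 0 d < 1"
  shows "wnorm 0 (\<lambda>m. \<Sum>\<^sub>\<infinity>n. nct_power \<theta> d n m) \<le> 1 / (1 - wnorm 0 d)"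
proof -
  have geometric: "((\<lambda>n. wnorm 0 d ^ n) has_sum 1 / (1 - wnorm 0 d)) UNIV"
    using geometric_sums[of "wnorm 0 d"] small wnorm_nonneg[of 0 d]
    by (intro sums_nonneg_imp_has_sum) auto
  have "wnorm 0 (\<lambda>m. \<Sum>\<^sub>\<infinity>n. nct_power \<theta> d n m) \<le> (\<Sum>\<^sub>\<infinity>n. wnorm 0 (nct_power \<theta> d n))"
    using rapid_decay_infsum[OF rapid_decay_nct_power[OF d] wnorm_nct_power_summable[OF d small]] by blast
  also have "\<dots> \<le> (\<Sum>\<^sub>\<infinity>n. wnorm 0 d ^ n)"
    by (intro infsum_mono wnorm_nct_power_summable[OF d small] wnorm_nct_power_le[OF d]
        has_sum_imp_summable[OF geometric])
  also have "\<dots> = 1 / (1 - wnorm 0 d)"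
    using geometric by (rule infsumI)
  finally show ?thesis .
qed

lemma nct_neumann_inverse:
  assumes d: "rapid_decay d" and small: "wnorm 0 d < 1"
  obtains s where "rapid_decay s"
    and "nct_mult \<theta> (\<lambda>k. nct_one k - d k) s = nct_one"
    and "nct_mult \<theta> s (\<lambda>k. nct_one k - d k) = nct_one"
    and "wnorm 0 s \<le> 1 / (1 - wnorm 0 d)"
proof -
  let ?q = "nct_power \<theta> d"
  define s where "s m = (\<Sum>\<^sub>\<infinity>n. ?q n m)" for m
  have q: "rapid_decay (?q n)" for n
    by (rule rapid_decay_nct_power[OF d])
  have qs: "(\<lambda>n. wnorm N (?q n)) summable_on UNIV" for N
    by (rule wnorm_nct_power_summable[OF d small])
  have s: "rapid_decay s"
    unfolding rapid_decay_def s_def using rapid_decay_infsum[OF q qs] by blast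
  have bound: "wnorm 0 s \<le> 1 / (1 - wnorm 0 d)"
    unfolding s_def[abs_def] by (rule wnorm_nct_power_series_le[OF d small])
  have telescope: "(\<lambda>m. s m - (\<Sum>\<^sub>\<infinity>n. ?q (Suc n) m)) = nct_one"
  proof
    fix m
    have "(\<lambda>n. ?q n m) summable_on UNIV"
      by (rule abs_summable_summable, rule summable_on_comparison_test[OF qs[of 0]])
         (auto intro: cmod_le_wnorm_0 q)
    then show "s m - (\<Sum>\<^sub>\<infinity>n. ?q (Suc n) m) = nct_one m"
      unfolding s_def by (simp add: infsum_nat_split_head)
  qed
  have "nct_mult \<theta> (\<lambda>k. nct_one k - d k) s = (\<lambda>m. s m - nct_mult \<theta> d s m)"
    by (simp add: nct_mult_diff_left[OF rapid_decay_nct_one d s])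
  also have "nct_mult \<theta> d s = (\<lambda>m. \<Sum>\<^sub>\<infinity>n. ?q (Suc n) m)"
    unfolding s_def[abs_def] nct_mult_infsum_right[OF d q qs] by (simp add: nct_power_Suc)
  finally have left: "nct_mult \<theta> (\<lambda>k. nct_one k - d k) s = nct_one"
    using telescope by simp
  have "nct_mult \<theta> s (\<lambda>k. nct_one k - d k) = (\<lambda>m. s m - nct_mult \<theta> s d m)"
    by (simp add: nct_mult_diff_right[OF s rapid_decay_nct_one d])
  also have "nct_mult \<theta> s d = (\<lambda>m. \<Sum>\<^sub>\<infinity>n. ?q (Suc n) m)"
    unfolding s_def[abs_def] nct_mult_infsum_left[OF d q qs] by (simp add: nct_power_Suc_right[OF d])
  finally have right: "nct_mult \<theta> s (\<lambda>k. nct_one k - d k) = nct_one"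
    using telescope by simp
  from that[OF s left right bound] show ?thesis .
qed

section \<open>Inverses and their perturbations\<close>

definition nct_inverse_pair :: "real^'n::{finite,linorder}^'n::{finite,linorder}
    \<Rightarrow> (int^'n::{finite,linorder} \<Rightarrow> complex) \<Rightarrow> (int^'n::{finite,linorder} \<Rightarrow> complex) \<Rightarrow> bool" where
  "nct_inverse_pair \<theta> a c \<longleftrightarrow> rapid_decay a \<and> rapid_decay c \<and>
     nct_mult \<theta> a c = nct_one \<and> nct_mult \<theta> c a = nct_one"

lemma nct_invertible_iff_inverse_pair: "nct_invertible \<theta> a \<longleftrightarrow> (\<exists>c. nct_inverse_pair \<theta> a c)"
  unfolding nct_invertible_def nct_inverse_pair_def Bex_def nct_smooth_iff_rapid_decay by auto

lemma nct_inverse_pair_one: "nct_inverse_pair \<theta> nct_one nct_one"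
  by (simp add: nct_inverse_pair_def rapid_decay_nct_one)

lemma nct_inverse_pair_scale:
  "nct_inverse_pair \<theta> a c \<Longrightarrow> r \<noteq> 0 \<Longrightarrow> nct_inverse_pair \<theta> (\<lambda>k. r * a k) (\<lambda>k. inverse r * c k)"
  by (auto simp: nct_inverse_pair_def rapid_decay_scale nct_mult_scale_left nct_mult_scale_right)

lemma nct_inverse_pair_mult:
  assumes "nct_inverse_pair \<theta> a c" "nct_inverse_pair \<theta> e s"
  shows "nct_inverse_pair \<theta> (nct_mult \<theta> a e) (nct_mult \<theta> s c)"
proof -
  have a: "rapid_decay a" and c: "rapid_decay c" and e: "rapid_decay e" and s: "rapid_decay s"
    using assms by (auto simp: nct_inverse_pair_def)
  have "nct_mult \<theta> (nct_mult \<theta> a e) (nct_mult \<theta> s c) = nct_mult \<theta> a (nct_mult \<theta> (nct_mult \<theta> e s) c)"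
    by (simp add: nct_mult_assoc a c e s rapid_decay_nct_mult)
  moreover have "nct_mult \<theta> (nct_mult \<theta> s c) (nct_mult \<theta> a e) = nct_mult \<theta> s (nct_mult \<theta> (nct_mult \<theta> c a) e)"
    by (simp add: nct_mult_assoc a c e s rapid_decay_nct_mult)
  ultimately show ?thesis
    using assms by (simp add: nct_inverse_pair_def rapid_decay_nct_mult)
qed

lemma nct_inverse_pair_perturb:
  assumes ac: "nct_inverse_pair \<theta> a c" and b: "rapid_decay b"
    and small: "wnorm 0 b * wnorm 0 c \<le> 1 / 2"
  obtains c' where "nct_inverse_pair \<theta> (\<lambda>k. a k + b k) c'" and "wnorm 0 c' \<le> 2 * wnorm 0 c"
proof -
  have a: "rapid_decay a" and c: "rapid_decay c" and a_c: "nct_mult \<theta> a c = nct_one"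
    using ac by (auto simp: nct_inverse_pair_def)
  \<comment> \<open>\<open>a + b = a (1 + c b)\<close>, and \<open>1 + c b\<close> is inverted by a Neumann series.\<close>
  define d where "d k = - nct_mult \<theta> c b k" for k
  have d: "rapid_decay d"
    using rapid_decay_scale[OF rapid_decay_nct_mult[OF c b], of "-1"] by (simp add: d_def[abs_def])
  have "wnorm 0 d \<le> wnorm 0 c * wnorm 0 b"
    using wnorm_scale[of 0 "-1" "nct_mult \<theta> c b"] wnorm_nct_mult_le[OF c b, of 0 \<theta>]
    by (simp add: d_def[abs_def])
  then have d_small: "wnorm 0 d \<le> 1 / 2"
    using small by (simp add: mult.commute)
  then obtain s where s: "nct_inverse_pair \<theta> (\<lambda>k. nct_one k - d k) s"
    and s_bound: "wnorm 0 s \<le> 1 / (1 - wnorm 0 d)"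
    using nct_neumann_inverse[OF d, of \<theta>] rapid_decay_diff[OF rapid_decay_nct_one d]
    by (force simp: nct_inverse_pair_def)
  have "nct_mult \<theta> a d = (\<lambda>m. - nct_mult \<theta> (nct_mult \<theta> a c) b m)"
    using nct_mult_scale_right[of \<theta> a "-1" "nct_mult \<theta> c b"]
    by (simp add: d_def[abs_def] nct_mult_assoc[OF a c b])
  then have "nct_mult \<theta> a (\<lambda>k. nct_one k - d k) = (\<lambda>k. a k + b k)"
    by (simp add: nct_mult_diff_right[OF a rapid_decay_nct_one d] a_c)
  moreover have "wnorm 0 (nct_mult \<theta> s c) \<le> 2 * wnorm 0 c"
  proof -
    have "1 / (1 - wnorm 0 d) \<le> 2"
      using d_small by (simp add: divide_le_eq)
    then have "wnorm 0 s * wnorm 0 c \<le> 2 * wnorm 0 c"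
      using s_bound by (intro mult_right_mono) (auto simp: wnorm_nonneg)
    then show ?thesis
      using s c wnorm_nct_mult_le[of s c 0 \<theta>] by (auto simp: nct_inverse_pair_def)
  qed
  ultimately show ?thesis
    using that nct_inverse_pair_mult[OF ac s] by simp
qed

lemma uniform_inverse_bound_on_compact:
  fixes K :: "'a::metric_space set" and G :: "'a \<Rightarrow> int^'n::{finite,linorder} \<Rightarrow> complex"
  assumes "compact K"
    and G: "\<And>p. p \<in> K \<Longrightarrow> rapid_decay (G p)"
    and inv: "\<And>p. p \<in> K \<Longrightarrow> \<exists>c. nct_inverse_pair \<theta> (G p) c"
    and cont: "\<And>p e. p \<in> K \<Longrightarrow> 0 < e \<Longrightarrow> \<exists>\<delta>>0. \<forall>q\<in>K. dist q p < \<delta> \<longrightarrow> wnorm 0 (\<lambda>k. G q k - G p k) < e"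
  obtains M where "\<And>p. p \<in> K \<Longrightarrow> \<exists>c. nct_inverse_pair \<theta> (G p) c \<and> wnorm 0 c \<le> M"
proof -
  obtain inv_G where inv_G: "\<And>p. p \<in> K \<Longrightarrow> nct_inverse_pair \<theta> (G p) (inv_G p)"
    using inv by metis
  define r where "r p = 1 / (2 * (wnorm 0 (inv_G p) + 1))" for p
  have r: "0 < r p" for p
    by (simp add: r_def add_nonneg_pos wnorm_nonneg)
  have "\<exists>\<delta>>0. \<forall>q\<in>K. dist q p < \<delta> \<longrightarrow> wnorm 0 (\<lambda>k. G q k - G p k) < r p" if "p \<in> K" for p
    by (rule cont[OF that r])
  then obtain \<delta> where \<delta>: "\<And>p. p \<in> K \<Longrightarrow> 0 < \<delta> p"
    and close: "\<And>p q. p \<in> K \<Longrightarrow> q \<in> K \<Longrightarrow> dist q p < \<delta> p \<Longrightarrow> wnorm 0 (\<lambda>k. G q k - G p k) < r p"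
    by metis
  have near: "\<exists>c. nct_inverse_pair \<theta> (G q) c \<and> wnorm 0 c \<le> 2 * wnorm 0 (inv_G p)"
    if p: "p \<in> K" and q: "q \<in> K" and "dist q p < \<delta> p" for p q
  proof -
    let ?b = "\<lambda>k. G q k - G p k"
    have "wnorm 0 ?b * wnorm 0 (inv_G p) \<le> r p * wnorm 0 (inv_G p)"
      using close[OF p q \<open>dist q p < \<delta> p\<close>] by (intro mult_right_mono) (auto simp: wnorm_nonneg)
    also have "\<dots> \<le> 1 / 2"
      using wnorm_nonneg[of 0 "inv_G p"] by (simp add: r_def field_simps)
    finally obtain c where "nct_inverse_pair \<theta> (\<lambda>k. G p k + ?b k) c" "wnorm 0 c \<le> 2 * wnorm 0 (inv_G p)"
      using nct_inverse_pair_perturb[OF inv_G[OF p] rapid_decay_diff[OF G[OF q] G[OF p]]] by blast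
    then show ?thesis
      by auto
  qed
  have "K \<subseteq> (\<Union>p\<in>K. ball p (\<delta> p))"
    using \<delta> by (auto intro!: bexI)
  then obtain C where "C \<subseteq> K" "finite C" and cover: "K \<subseteq> (\<Union>p\<in>C. ball p (\<delta> p))"
    using compactE_image[OF \<open>compact K\<close>, of K "\<lambda>p. ball p (\<delta> p)"] by blast
  show ?thesis
  proof (rule that[of "\<Sum>p\<in>C. 2 * wnorm 0 (inv_G p)"])
    fix q assume "q \<in> K"
    then obtain p where "p \<in> C" "dist q p < \<delta> p"
      using cover by (auto simp: dist_commute)
    moreover have "2 * wnorm 0 (inv_G p) \<le> (\<Sum>p\<in>C. 2 * wnorm 0 (inv_G p))"
      using \<open>p \<in> C\<close> \<open>finite C\<close> by (intro member_le_sum) (auto simp: wnorm_nonneg)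
    ultimately show "\<exists>c. nct_inverse_pair \<theta> (G q) c \<and> wnorm 0 c \<le> (\<Sum>p\<in>C. 2 * wnorm 0 (inv_G p))"
      using near[of p q] \<open>C \<subseteq> K\<close> \<open>q \<in> K\<close> by (meson order_trans subsetD)
  qed
qed

section \<open>Lipschitz estimate for smooth symbols\<close>

lemma axis_increment_bound:
  fixes g :: "real^'n::finite \<Rightarrow> complex"
  assumes deriv: "\<And>\<xi>. \<xi> \<in> S \<Longrightarrow> ((\<lambda>t. g (\<xi> + t *\<^sub>R axis i 1)) has_vector_derivative D \<xi>) (at 0)"
    and segment: "\<And>t. t \<in> {0..1} \<Longrightarrow> p + (t * h) *\<^sub>R axis i 1 \<in> S"
    and bound: "\<And>\<xi>. \<xi> \<in> S \<Longrightarrow> cmod (D \<xi>) \<le> B"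
  shows "cmod (g (p + h *\<^sub>R axis i 1) - g p) \<le> B * \<bar>h\<bar>"
proof -
  define \<phi> where "\<phi> t = g (p + (t * h) *\<^sub>R axis i 1)" for t
  have \<phi>_deriv: "(\<phi> has_vector_derivative h *\<^sub>R D (p + (t * h) *\<^sub>R axis i 1)) (at t)" if "t \<in> {0..1}" for t
  proof -
    let ?q = "p + (t * h) *\<^sub>R axis i 1"
    have "((\<lambda>s. g (?q + s *\<^sub>R axis i 1)) \<circ> (\<lambda>s. (s - t) * h) has_vector_derivative h *\<^sub>R D ?q) (at t)"
      using deriv[OF segment[OF that]]
      by (intro vector_diff_chain_at) (auto intro!: derivative_eq_intros simp flip: has_real_derivative_iff_has_vector_derivative)
    moreover have "(\<lambda>s. g (?q + s *\<^sub>R axis i 1)) \<circ> (\<lambda>s. (s - t) * h) = \<phi>"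
      by (auto simp: \<phi>_def fun_eq_iff algebra_simps simp flip: scaleR_add_left)
    ultimately show ?thesis
      by simp
  qed
  have "norm (\<phi> 1 - \<phi> 0) \<le> (\<bar>h\<bar> * B) * norm (1 - (0::real))"
  proof (rule differentiable_bound[where f'="\<lambda>t x. x *\<^sub>R h *\<^sub>R D (p + (t * h) *\<^sub>R axis i 1)"])
    show "(\<phi> has_derivative (\<lambda>x. x *\<^sub>R h *\<^sub>R D (p + (t * h) *\<^sub>R axis i 1))) (at t within {0..1})"
      if "t \<in> {0..1}" for t
      using \<phi>_deriv[OF that] unfolding has_vector_derivative_def by (rule has_derivative_at_withinI)
    show "onorm (\<lambda>x. x *\<^sub>R h *\<^sub>R D (p + (t * h) *\<^sub>R axis i 1)) \<le> \<bar>h\<bar> * B" if "t \<in> {0..1}" for t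
    proof (rule onorm_le)
      fix x :: real
      have "\<bar>x\<bar> * \<bar>h\<bar> * cmod (D (p + (t * h) *\<^sub>R axis i 1)) \<le> \<bar>x\<bar> * \<bar>h\<bar> * B"
        using bound[OF segment[OF that]] by (intro mult_left_mono) auto
      then show "norm (x *\<^sub>R h *\<^sub>R D (p + (t * h) *\<^sub>R axis i 1)) \<le> \<bar>h\<bar> * B * norm x"
        by (simp add: abs_mult mult_ac)
    qed
  qed auto
  then show ?thesis
    by (simp add: \<phi>_def mult.commute)
qed

lemma coordinatewise_increment_bound:
  fixes g :: "real^'n::finite \<Rightarrow> complex"
  assumes deriv: "\<And>i \<xi>. \<xi> \<in> S \<Longrightarrow> ((\<lambda>t. g (\<xi> + t *\<^sub>R axis i 1)) has_vector_derivative D i \<xi>) (at 0)"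
    and bound: "\<And>i \<xi>. \<xi> \<in> S \<Longrightarrow> cmod (D i \<xi>) \<le> B"
    and box: "\<And>z. (\<And>j. \<bar>z$j - x0$j\<bar> \<le> \<bar>x$j - x0$j\<bar>) \<Longrightarrow> z \<in> S"
  shows "cmod (g x - g x0) \<le> B * (\<Sum>j\<in>UNIV. \<bar>x$j - x0$j\<bar>)"
proof -
  \<comment> \<open>Move from \<open>x0\<close> to \<open>x\<close> one coordinate at a time; \<open>P I\<close> has the coordinates in \<open>I\<close> already moved.\<close>
  define P where "P I = (\<chi> j. if j \<in> I then x$j else x0$j)" for I
  have "cmod (g (P I) - g x0) \<le> B * (\<Sum>j\<in>I. \<bar>x$j - x0$j\<bar>)" if "finite I" for I
    using that
  proof (induction I rule: finite_induct)
    case empty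
    then show ?case
      by (simp add: P_def vec_eq_iff)
  next
    case (insert i I)
    have step: "P (insert i I) = P I + (x$i - x0$i) *\<^sub>R axis i 1"
      using insert.hyps by (auto simp: P_def vec_eq_iff axis_def)
    have "cmod (g (P I + (x$i - x0$i) *\<^sub>R axis i 1) - g (P I)) \<le> B * \<bar>x$i - x0$i\<bar>"
    proof (rule axis_increment_bound[where S=S, OF deriv _ bound])
      fix t :: real assume "t \<in> {0..1}"
      then have "\<bar>t\<bar> * \<bar>x$i - x0$i\<bar> \<le> \<bar>x$i - x0$i\<bar>"
        by (intro mult_left_le_one_le) auto
      then show "P I + (t * (x$i - x0$i)) *\<^sub>R axis i 1 \<in> S"
        using insert.hyps by (intro box) (auto simp: P_def axis_def abs_mult)
    qed
    then show ?case
      using insert norm_triangle_ineq[of "g (P (insert i I)) - g (P I)" "g (P I) - g x0"]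
      by (simp add: step algebra_simps)
  qed
  moreover have "P UNIV = x"
    by (simp add: P_def vec_eq_iff)
  ultimately show ?thesis
    by (metis finite_class.finite_UNIV)
qed

lemma valued_smooth_on_partial:
  assumes "valued_smooth_on S F" "\<xi> \<in> S"
  shows "((\<lambda>t. F (\<xi> + t *\<^sub>R axis i 1) k) has_vector_derivative pds [i] (\<lambda>\<eta>. F \<eta> k) \<xi>) (at 0)"
proof -
  have "has_all_partials_on S (\<lambda>\<eta>. F \<eta> k)"
    using assms(1) by (simp add: valued_smooth_on_def)
  then have "((\<lambda>t. pds [] (\<lambda>\<eta>. F \<eta> k) (\<xi> + t *\<^sub>R axis i 1)) has_vector_derivative pds [i] (\<lambda>\<eta>. F \<eta> k) \<xi>) (at 0)"
    using assms(2) unfolding has_all_partials_on_def by blast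
  then show ?thesis
    by simp
qed

lemma valued_smooth_on_coefficient_lipschitz:
  fixes F :: "real^'n::{finite,linorder} \<Rightarrow> int^'n::{finite,linorder} \<Rightarrow> complex"
  assumes F: "valued_smooth_on (- {0}) F" and "x0 \<noteq> 0"
  obtains B where "\<And>x k. dist x x0 < norm x0 / 2 \<Longrightarrow>
    cmod (F x k - F x0 k) \<le> B * dist x x0 * (1 / weight k ^ (2 * CARD('n)))"
proof -
  define K where "K = cball x0 (norm x0 / 2)"
  define NN where "NN = 2 * CARD('n)"
  have K: "compact K" "K \<subseteq> - {0}"
    using \<open>x0 \<noteq> 0\<close> by (auto simp: K_def dist_norm)
  have "\<forall>i. \<exists>C. \<forall>\<xi>\<in>K. \<forall>k. weight k ^ NN * cmod (pds [i] (\<lambda>\<eta>. F \<eta> k) \<xi>) \<le> C"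
    using F K unfolding valued_smooth_on_def weight_def by blast
  then obtain C where C: "\<And>i \<xi> k. \<xi> \<in> K \<Longrightarrow> weight k ^ NN * cmod (pds [i] (\<lambda>\<eta>. F \<eta> k) \<xi>) \<le> C i"
    by metis
  define B where "B = (\<Sum>i\<in>UNIV. \<bar>C i\<bar>)"
  have C_le_B: "C i \<le> B" for i
    using member_le_sum[of i UNIV "\<lambda>i. \<bar>C i\<bar>"] by (simp add: B_def)
  show ?thesis
  proof (rule that[of "B * CARD('n)"])
    fix x k assume x: "dist x x0 < norm x0 / 2"
    have "cmod (F x k - F x0 k) \<le> (B / weight k ^ NN) * (\<Sum>j\<in>UNIV. \<bar>x$j - x0$j\<bar>)"
    proof (rule coordinatewise_increment_bound[where S=K])
      show "((\<lambda>t. F (\<xi> + t *\<^sub>R axis i 1) k) has_vector_derivative pds [i] (\<lambda>\<eta>. F \<eta> k) \<xi>) (at 0)"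
        if "\<xi> \<in> K" for i \<xi>
        using F K(2) that by (blast intro: valued_smooth_on_partial)
      show "cmod (pds [i] (\<lambda>\<eta>. F \<eta> k) \<xi>) \<le> B / weight k ^ NN" if "\<xi> \<in> K" for i \<xi>
        using order_trans[OF C[OF that] C_le_B] weight_pos[of k] by (simp add: field_simps)
      show "z \<in> K" if "\<And>j. \<bar>z$j - x0$j\<bar> \<le> \<bar>x$j - x0$j\<bar>" for z
        using norm_le_componentwise_cart[of "z - x0" "x - x0"] that x
        by (simp add: K_def dist_norm norm_minus_commute)
    qed
    also have "\<dots> \<le> (B / weight k ^ NN) * (CARD('n) * dist x x0)"
    proof (rule mult_left_mono)
      show "(\<Sum>j\<in>UNIV. \<bar>x$j - x0$j\<bar>) \<le> CARD('n) * dist x x0"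
        using sum_bounded_above[of UNIV "\<lambda>j. \<bar>x$j - x0$j\<bar>" "dist x x0"]
        by (simp add: dist_norm component_le_norm_cart flip: vector_minus_component)
      show "0 \<le> B / weight k ^ NN"
        by (simp add: B_def sum_nonneg)
    qed
    finally show "cmod (F x k - F x0 k) \<le> B * CARD('n) * dist x x0 * (1 / weight k ^ (2 * CARD('n)))"
      by (simp add: NN_def field_simps)
  qed
qed

lemma valued_smooth_on_wnorm_lipschitz:
  fixes F :: "real^'n::{finite,linorder} \<Rightarrow> int^'n::{finite,linorder} \<Rightarrow> complex"
  assumes F: "valued_smooth_on (- {0}) F" and "x0 \<noteq> 0"
  obtains C \<delta> where "0 < \<delta>" "\<And>x. dist x x0 < \<delta> \<Longrightarrow> wnorm 0 (\<lambda>k. F x k - F x0 k) \<le> C * dist x x0"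
proof -
  obtain B where B: "\<And>x k. dist x x0 < norm x0 / 2 \<Longrightarrow>
      cmod (F x k - F x0 k) \<le> B * dist x x0 * (1 / weight k ^ (2 * CARD('n)))"
    using valued_smooth_on_coefficient_lipschitz[OF F \<open>x0 \<noteq> 0\<close>] by blast
  let ?S = "\<Sum>\<^sub>\<infinity>k::int^'n::{finite,linorder}. 1 / weight k ^ (2 * CARD('n))"
  show ?thesis
  proof (rule that[of "norm x0 / 2" "B * ?S"])
    show "0 < norm x0 / 2"
      using \<open>x0 \<noteq> 0\<close> by simp
    fix x assume x: "dist x x0 < norm x0 / 2"
    have summable: "(\<lambda>k::int^'n::{finite,linorder}. B * dist x x0 * (1 / weight k ^ (2 * CARD('n)))) summable_on UNIV"
      by (rule summable_on_cmult_right[OF weight_inverse_power_summable])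
    have "wnorm 0 (\<lambda>k. F x k - F x0 k)
        \<le> (\<Sum>\<^sub>\<infinity>k::int^'n::{finite,linorder}. B * dist x x0 * (1 / weight k ^ (2 * CARD('n))))"
      unfolding wnorm_def using B[OF x]
      by (intro infsum_mono summable_on_comparison_test[OF summable] summable) auto
    also have "\<dots> = B * ?S * dist x x0"
      by (simp only: infsum_cmult_right' mult_ac)
    finally show "wnorm 0 (\<lambda>k. F x k - F x0 k) \<le> B * ?S * dist x x0" .
  qed
qed

section \<open>The set \<open>\<Theta>(P)\<close>\<close>

lemma Theta_scale:
  fixes R :: "real^'n::{finite,linorder} \<Rightarrow> int^'n::{finite,linorder} \<Rightarrow> complex"
  assumes hom: "\<And>t \<xi>. 0 < t \<Longrightarrow> \<xi> \<noteq> 0 \<Longrightarrow> R (t *\<^sub>R \<xi>) = (\<lambda>k. complex_of_real (t powr w) * R \<xi> k)"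
    and "0 < w" and z: "z \<in> Theta \<theta> R" and "0 < \<tau>"
  shows "complex_of_real \<tau> * z \<in> Theta \<theta> R"
proof -
  have "nct_invertible \<theta> (\<lambda>k. R \<xi> k - complex_of_real \<tau> * z * nct_one k)" if "\<xi> \<noteq> 0" for \<xi>
  proof -
    \<comment> \<open>Rescale \<open>\<xi>\<close> so that the symbol gets divided by \<open>\<tau>\<close>.\<close>
    define s where "s = \<tau> powr (- 1 / w)"
    have "0 < s"
      using \<open>0 < \<tau>\<close> by (simp add: s_def)
    have "s powr w = \<tau> powr (- 1 / w * w)"
      unfolding s_def by (rule powr_powr)
    also have "\<dots> = 1 / \<tau>"
      using \<open>0 < \<tau>\<close> \<open>0 < w\<close> by (simp add: powr_minus divide_inverse)
    finally have R_s: "R (s *\<^sub>R \<xi>) k = complex_of_real (1 / \<tau>) * R \<xi> k" for k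
      using hom[OF \<open>0 < s\<close> that] by simp
    have "s *\<^sub>R \<xi> \<noteq> 0"
      using \<open>0 < s\<close> that by simp
    then have "nct_invertible \<theta> (\<lambda>k. R (s *\<^sub>R \<xi>) k - z * nct_one k)"
      using z unfolding Theta_def by blast
    then obtain c where "nct_inverse_pair \<theta> (\<lambda>k. R (s *\<^sub>R \<xi>) k - z * nct_one k) c"
      unfolding nct_invertible_iff_inverse_pair by blast
    from nct_inverse_pair_scale[OF this, of "complex_of_real \<tau>"]
    have "nct_inverse_pair \<theta> (\<lambda>k. complex_of_real \<tau> * (R (s *\<^sub>R \<xi>) k - z * nct_one k))
        (\<lambda>k. inverse (complex_of_real \<tau>) * c k)"
      using \<open>0 < \<tau>\<close> by simp
    moreover have "(\<lambda>k. complex_of_real \<tau> * (R (s *\<^sub>R \<xi>) k - z * nct_one k))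
        = (\<lambda>k. R \<xi> k - complex_of_real \<tau> * z * nct_one k)"
      using \<open>0 < \<tau>\<close> by (simp add: R_s algebra_simps of_real_divide)
    ultimately show ?thesis
      by (auto simp: nct_invertible_iff_inverse_pair)
  qed
  moreover have "complex_of_real \<tau> * z \<noteq> 0"
    using z \<open>0 < \<tau>\<close> by (simp add: Theta_def)
  ultimately show ?thesis
    by (simp add: Theta_def)
qed

lemma is_cone_Theta:
  fixes R :: "real^'n::{finite,linorder} \<Rightarrow> int^'n::{finite,linorder} \<Rightarrow> complex"
  assumes "\<And>t \<xi>. 0 < t \<Longrightarrow> \<xi> \<noteq> 0 \<Longrightarrow> R (t *\<^sub>R \<xi>) = (\<lambda>k. complex_of_real (t powr w) * R \<xi> k)"
    and "0 < w"
  shows "is_cone (Theta \<theta> R)"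
  using Theta_scale[OF assms] by (simp add: is_cone_def)

definition symbol_homotopy :: "('a \<Rightarrow> int^'n::finite \<Rightarrow> complex) \<Rightarrow> complex \<Rightarrow> 'a \<times> real \<Rightarrow> int^'n \<Rightarrow> complex" where
  "symbol_homotopy R z p k = complex_of_real (1 - snd p) * R (fst p) k - complex_of_real (snd p) * z * nct_one k"

lemma rapid_decay_symbol_homotopy:
  "rapid_decay (R \<eta>) \<Longrightarrow> rapid_decay (symbol_homotopy R z (\<eta>, t))"
  unfolding symbol_homotopy_def[abs_def]
  by (intro rapid_decay_diff rapid_decay_scale rapid_decay_nct_one) simp

lemma symbol_homotopy_invertible:
  fixes R :: "real^'n::{finite,linorder} \<Rightarrow> int^'n::{finite,linorder} \<Rightarrow> complex"
  assumes hom: "\<And>t \<xi>. 0 < t \<Longrightarrow> \<xi> \<noteq> 0 \<Longrightarrow> R (t *\<^sub>R \<xi>) = (\<lambda>k. complex_of_real (t powr w) * R \<xi> k)"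
    and "0 < w" and ell: "nct_elliptic \<theta> R" and z: "z \<in> Theta \<theta> R"
    and "\<eta> \<noteq> 0" and t: "0 \<le> t" "t \<le> 1"
  shows "\<exists>c. nct_inverse_pair \<theta> (symbol_homotopy R z (\<eta>, t)) c"
proof -
  consider "t = 0" | "t = 1" | "0 < t" "t < 1"
    using t by linarith
  then show ?thesis
  proof cases
    case 1
    then have "symbol_homotopy R z (\<eta>, t) = R \<eta>"
      by (simp add: symbol_homotopy_def fun_eq_iff)
    then show ?thesis
      using ell \<open>\<eta> \<noteq> 0\<close> by (simp add: nct_elliptic_def nct_invertible_iff_inverse_pair)
  next
    case 2
    have "z \<noteq> 0"
      using z by (simp add: Theta_def)
    moreover have "symbol_homotopy R z (\<eta>, t) = (\<lambda>k. (- z) * nct_one k)"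
      using 2 by (simp add: symbol_homotopy_def fun_eq_iff)
    ultimately show ?thesis
      using nct_inverse_pair_scale[OF nct_inverse_pair_one, of "- z" \<theta>] by auto
  next
    case 3
    \<comment> \<open>Up to the factor \<open>1 - t\<close>, this is \<open>R \<eta> - \<tau> z\<close> with \<open>\<tau> z \<in> Theta \<theta> R\<close> by the cone property.\<close>
    define \<tau> where "\<tau> = t / (1 - t)"
    have "0 < \<tau>"
      using 3 by (simp add: \<tau>_def)
    from Theta_scale[OF hom \<open>0 < w\<close> z this]
    have "complex_of_real \<tau> * z \<in> Theta \<theta> R" .
    then obtain c where "nct_inverse_pair \<theta> (\<lambda>k. R \<eta> k - complex_of_real \<tau> * z * nct_one k) c"
      using \<open>\<eta> \<noteq> 0\<close> by (auto simp: Theta_def nct_invertible_iff_inverse_pair mult.assoc)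
    from nct_inverse_pair_scale[OF this, of "complex_of_real (1 - t)"]
    have "nct_inverse_pair \<theta> (\<lambda>k. complex_of_real (1 - t) * (R \<eta> k - complex_of_real \<tau> * z * nct_one k))
        (\<lambda>k. inverse (complex_of_real (1 - t)) * c k)"
      using 3 by simp
    moreover have "complex_of_real (1 - t) * complex_of_real \<tau> = complex_of_real t"
      using 3 by (simp add: \<tau>_def flip: of_real_mult)
    then have "(\<lambda>k. complex_of_real (1 - t) * (R \<eta> k - complex_of_real \<tau> * z * nct_one k))
        = symbol_homotopy R z (\<eta>, t)"
      unfolding symbol_homotopy_def right_diff_distrib mult.assoc[symmetric] by simp
    ultimately show ?thesis
      by auto
  qed
qed

lemma wnorm_symbol_homotopy_diff:
  fixes R :: "'a \<Rightarrow> int^'n::finite \<Rightarrow> complex"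
  assumes "rapid_decay (R \<eta>)" "rapid_decay (R \<eta>')" "0 \<le> t'" "t' \<le> 1"
  shows "wnorm 0 (\<lambda>k. symbol_homotopy R z (\<eta>', t') k - symbol_homotopy R z (\<eta>, t) k)
    \<le> wnorm 0 (\<lambda>k. R \<eta>' k - R \<eta> k) + \<bar>t' - t\<bar> * (wnorm 0 (R \<eta>) + cmod z)"
proof -
  let ?D = "\<lambda>k. R \<eta>' k - R \<eta> k"
  let ?A = "\<lambda>k. complex_of_real (1 - t') * ?D k"
  let ?B = "\<lambda>k. complex_of_real (t - t') * R \<eta> k"
  let ?C = "\<lambda>k::int^'n. complex_of_real (t' - t) * z * nct_one k"
  have D: "rapid_decay ?D"
    using assms by (intro rapid_decay_diff)
  have A: "rapid_decay ?A" and B: "rapid_decay ?B" and C: "rapid_decay ?C"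
    using assms D by (auto intro: rapid_decay_scale rapid_decay_nct_one)
  have eq: "(\<lambda>k. symbol_homotopy R z (\<eta>', t') k - symbol_homotopy R z (\<eta>, t) k) = (\<lambda>k. ?A k + (?B k - ?C k))"
    by (auto simp: symbol_homotopy_def fun_eq_iff algebra_simps)
  have "wnorm 0 (\<lambda>k. symbol_homotopy R z (\<eta>', t') k - symbol_homotopy R z (\<eta>, t) k)
      \<le> wnorm 0 ?A + (wnorm 0 ?B + wnorm 0 ?C)"
    unfolding eq by (rule order_trans[OF wnorm_add[OF A rapid_decay_diff[OF B C]] add_left_mono[OF wnorm_diff[OF B C]]])
  also have "\<dots> = \<bar>1 - t'\<bar> * wnorm 0 ?D + \<bar>t' - t\<bar> * (wnorm 0 (R \<eta>) + cmod z)"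
    unfolding wnorm_scale wnorm_nct_one norm_mult norm_of_real
    by (simp add: algebra_simps abs_minus_commute)
  also have "\<dots> \<le> wnorm 0 ?D + \<bar>t' - t\<bar> * (wnorm 0 (R \<eta>) + cmod z)"
    using assms mult_right_mono[of "\<bar>1 - t'\<bar>" 1 "wnorm 0 ?D"] by (simp add: wnorm_nonneg)
  finally show ?thesis .
qed

lemma symbol_homotopy_continuous:
  fixes R :: "real^'n::{finite,linorder} \<Rightarrow> int^'n::{finite,linorder} \<Rightarrow> complex"
  assumes smooth: "valued_smooth_on (- {0}) R" and rapid: "\<And>\<eta>. \<eta> \<noteq> 0 \<Longrightarrow> rapid_decay (R \<eta>)"
    and "\<eta> \<noteq> 0" and "0 < e"
  shows "\<exists>\<delta>>0. \<forall>\<eta>' t'. \<eta>' \<noteq> 0 \<longrightarrow> 0 \<le> t' \<longrightarrow> t' \<le> 1 \<longrightarrow> dist (\<eta>', t') (\<eta>, t) < \<delta> \<longrightarrow>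
    wnorm 0 (\<lambda>k. symbol_homotopy R z (\<eta>', t') k - symbol_homotopy R z (\<eta>, t) k) < e"
proof -
  obtain C \<delta>1 where "0 < \<delta>1"
    and lipschitz: "\<And>x. dist x \<eta> < \<delta>1 \<Longrightarrow> wnorm 0 (\<lambda>k. R x k - R \<eta> k) \<le> C * dist x \<eta>"
    using valued_smooth_on_wnorm_lipschitz[OF smooth \<open>\<eta> \<noteq> 0\<close>] by blast
  define A where "A = \<bar>C\<bar> + wnorm 0 (R \<eta>) + cmod z + 1"
  have "0 < A"
    by (simp add: A_def add_nonneg_pos wnorm_nonneg)
  show ?thesis
  proof (intro exI[of _ "min \<delta>1 (e / A)"] conjI allI impI)
    show "0 < min \<delta>1 (e / A)"
      using \<open>0 < \<delta>1\<close> \<open>0 < e\<close> \<open>0 < A\<close> by simp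
    fix \<eta>' t' assume "\<eta>' \<noteq> 0" "0 \<le> t'" "t' \<le> 1" and close: "dist (\<eta>', t') (\<eta>, t) < min \<delta>1 (e / A)"
    let ?d = "dist (\<eta>', t') (\<eta>, t)"
    have d: "dist \<eta>' \<eta> \<le> ?d" "\<bar>t' - t\<bar> \<le> ?d"
      using dist_fst_le[of "(\<eta>', t')" "(\<eta>, t)"] dist_snd_le[of "(\<eta>', t')" "(\<eta>, t)"]
      by (simp_all add: dist_real_def)
    have "dist \<eta>' \<eta> < \<delta>1"
      using close d(1) by linarith
    then have "wnorm 0 (\<lambda>k. R \<eta>' k - R \<eta> k) \<le> C * dist \<eta>' \<eta>"
      by (rule lipschitz)
    also have "\<dots> \<le> \<bar>C\<bar> * ?d"
      using d(1) by (intro mult_mono) auto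
    finally have "wnorm 0 (\<lambda>k. R \<eta>' k - R \<eta> k) \<le> \<bar>C\<bar> * ?d" .
    moreover have "\<bar>t' - t\<bar> * (wnorm 0 (R \<eta>) + cmod z) \<le> ?d * (wnorm 0 (R \<eta>) + cmod z)"
      using d(2) by (intro mult_right_mono) (auto simp: wnorm_nonneg)
    ultimately have "wnorm 0 (\<lambda>k. symbol_homotopy R z (\<eta>', t') k - symbol_homotopy R z (\<eta>, t) k) \<le> (A - 1) * ?d"
      using wnorm_symbol_homotopy_diff[OF rapid[OF \<open>\<eta> \<noteq> 0\<close>] rapid[OF \<open>\<eta>' \<noteq> 0\<close>] \<open>0 \<le> t'\<close> \<open>t' \<le> 1\<close>, of z t]
      by (simp add: A_def algebra_simps)
    also have "\<dots> < A * (e / A)"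
      using close \<open>0 < A\<close> zero_le_dist[of "(\<eta>', t')" "(\<eta>, t)"]
      by (intro le_less_trans[OF _ mult_strict_left_mono[of ?d]]) (auto simp: algebra_simps)
    finally show "wnorm 0 (\<lambda>k. symbol_homotopy R z (\<eta>', t') k - symbol_homotopy R z (\<eta>, t) k) < e"
      using \<open>0 < A\<close> by simp
  qed
qed

lemma symbol_homotopy_rescale:
  fixes R :: "real^'n::{finite,linorder} \<Rightarrow> int^'n::{finite,linorder} \<Rightarrow> complex"
  assumes hom: "\<And>t \<xi>. 0 < t \<Longrightarrow> \<xi> \<noteq> 0 \<Longrightarrow> R (t *\<^sub>R \<xi>) = (\<lambda>k. complex_of_real (t powr w) * R \<xi> k)"
    and "0 < r" "\<eta> \<noteq> 0"
  defines "t \<equiv> 1 / (r powr w + 1)"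
  shows "complex_of_real (r powr w + 1) * (symbol_homotopy R z0 (\<eta>, t) k - complex_of_real t * (z - z0) * nct_one k)
    = R (r *\<^sub>R \<eta>) k - z * nct_one k"
proof -
  have "r powr w + 1 \<noteq> 0"
    using powr_ge_zero[of r w] by linarith
  then have "(r powr w + 1) * (1 - t) = r powr w" "(r powr w + 1) * t = 1"
    by (simp_all add: t_def field_simps)
  then have scale: "complex_of_real (r powr w + 1) * complex_of_real (1 - t) = complex_of_real (r powr w)"
      "complex_of_real (r powr w + 1) * complex_of_real t = 1"
    by (simp_all only: of_real_mult[symmetric] of_real_1)
  have "complex_of_real (r powr w + 1) * (symbol_homotopy R z0 (\<eta>, t) k - complex_of_real t * (z - z0) * nct_one k)
      = (complex_of_real (r powr w + 1) * complex_of_real (1 - t)) * R \<eta> k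
        - (complex_of_real (r powr w + 1) * complex_of_real t) * (z0 * nct_one k + (z - z0) * nct_one k)"
    by (simp add: symbol_homotopy_def algebra_simps)
  also have "\<dots> = R (r *\<^sub>R \<eta>) k - z * nct_one k"
    unfolding scale hom[OF \<open>0 < r\<close> \<open>\<eta> \<noteq> 0\<close>] by (simp add: algebra_simps)
  finally show ?thesis .
qed

lemma Theta_of_symbol_homotopy_bound:
  fixes R :: "real^'n::{finite,linorder} \<Rightarrow> int^'n::{finite,linorder} \<Rightarrow> complex"
  assumes hom: "\<And>t \<xi>. 0 < t \<Longrightarrow> \<xi> \<noteq> 0 \<Longrightarrow> R (t *\<^sub>R \<xi>) = (\<lambda>k. complex_of_real (t powr w) * R \<xi> k)"
    and bound: "\<And>\<eta> t. norm \<eta> = 1 \<Longrightarrow> 0 \<le> t \<Longrightarrow> t \<le> 1 \<Longrightarrow>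
      \<exists>c. nct_inverse_pair \<theta> (symbol_homotopy R z0 (\<eta>, t)) c \<and> wnorm 0 c \<le> M"
    and "0 < M" and "z \<noteq> 0" and close: "cmod (z - z0) \<le> 1 / (2 * M)"
  shows "z \<in> Theta \<theta> R"
proof -
  have "nct_invertible \<theta> (\<lambda>k. R \<xi> k - z * nct_one k)" if "\<xi> \<noteq> 0" for \<xi>
  proof -
    define r where "r = norm \<xi>"
    define \<eta> where "\<eta> = (1 / r) *\<^sub>R \<xi>"
    define t where "t = 1 / (r powr w + 1)"
    have "0 < r" "norm \<eta> = 1" "\<eta> \<noteq> 0" "\<xi> = r *\<^sub>R \<eta>"
      using that by (auto simp: \<eta>_def r_def)
    have "0 < r powr w + 1"
      using powr_ge_zero[of r w] by linarith
    then have t: "0 \<le> t" "t \<le> 1"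
      by (auto simp: t_def)
    obtain c where c: "nct_inverse_pair \<theta> (symbol_homotopy R z0 (\<eta>, t)) c" "wnorm 0 c \<le> M"
      using bound[OF \<open>norm \<eta> = 1\<close> t] by blast
    define b where "b k = - (complex_of_real t * (z - z0)) * nct_one k" for k :: "int^'n::{finite,linorder}"
    have "wnorm 0 b = t * cmod (z - z0)"
      unfolding b_def[abs_def] wnorm_scale wnorm_nct_one using t by (simp add: norm_mult)
    also have "\<dots> \<le> 1 / (2 * M)"
      using t close by (meson mult_left_le_one_le norm_ge_zero order_trans)
    finally have "wnorm 0 b * wnorm 0 c \<le> 1 / (2 * M) * M"
      using c(2) \<open>0 < M\<close> by (intro mult_mono) (auto simp: wnorm_nonneg)
    then have "wnorm 0 b * wnorm 0 c \<le> 1 / 2"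
      using \<open>0 < M\<close> by simp
    moreover have "rapid_decay b"
      unfolding b_def[abs_def] by (rule rapid_decay_scale[OF rapid_decay_nct_one])
    ultimately obtain c' where "nct_inverse_pair \<theta> (\<lambda>k. symbol_homotopy R z0 (\<eta>, t) k + b k) c'"
      using nct_inverse_pair_perturb[OF c(1)] by blast
    from nct_inverse_pair_scale[OF this, of "complex_of_real (r powr w + 1)"]
    have "nct_inverse_pair \<theta> (\<lambda>k. complex_of_real (r powr w + 1) * (symbol_homotopy R z0 (\<eta>, t) k + b k))
        (\<lambda>k. inverse (complex_of_real (r powr w + 1)) * c' k)"
      using \<open>0 < r powr w + 1\<close> by (simp del: of_real_add)
    moreover have "(\<lambda>k. complex_of_real (r powr w + 1) * (symbol_homotopy R z0 (\<eta>, t) k + b k))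
        = (\<lambda>k. R \<xi> k - z * nct_one k)"
      using symbol_homotopy_rescale[OF hom \<open>0 < r\<close> \<open>\<eta> \<noteq> 0\<close>, of z0 _ z]
      by (simp add: b_def t_def \<open>\<xi> = r *\<^sub>R \<eta>\<close>)
    ultimately show ?thesis
      by (auto simp: nct_invertible_iff_inverse_pair)
  qed
  with \<open>z \<noteq> 0\<close> show ?thesis
    by (simp add: Theta_def)
qed

lemma nct_invertible_rapid_decay: "nct_invertible \<theta> a \<Longrightarrow> rapid_decay a"
  by (auto simp: nct_invertible_iff_inverse_pair nct_inverse_pair_def)

lemma open_Theta:
  fixes R :: "real^'n::{finite,linorder} \<Rightarrow> int^'n::{finite,linorder} \<Rightarrow> complex"
  assumes hom: "\<And>t \<xi>. 0 < t \<Longrightarrow> \<xi> \<noteq> 0 \<Longrightarrow> R (t *\<^sub>R \<xi>) = (\<lambda>k. complex_of_real (t powr w) * R \<xi> k)"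
    and "0 < w" and smooth: "valued_smooth_on (- {0}) R" and ell: "nct_elliptic \<theta> R"
  shows "open (Theta \<theta> R)"
  unfolding open_contains_ball
proof
  fix z0 assume z0: "z0 \<in> Theta \<theta> R"
  have rapid: "rapid_decay (R \<eta>)" if "\<eta> \<noteq> 0" for \<eta>
    using ell that unfolding nct_elliptic_def by (blast intro: nct_invertible_rapid_decay)
  define K where "K = sphere (0 :: real^'n::{finite,linorder}) 1 \<times> {0..1 :: real}"
  have K: "p \<in> K \<longleftrightarrow> norm (fst p) = 1 \<and> 0 \<le> snd p \<and> snd p \<le> 1" for p
    by (cases p) (auto simp: K_def)
  have nonzero: "fst p \<noteq> 0" if "p \<in> K" for p
    using that unfolding K by auto
  obtain M where M: "\<And>p. p \<in> K \<Longrightarrow> \<exists>c. nct_inverse_pair \<theta> (symbol_homotopy R z0 p) c \<and> wnorm 0 c \<le> M"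
  proof (rule uniform_inverse_bound_on_compact)
    show "compact K"
      unfolding K_def by (intro compact_Times compact_sphere compact_Icc)
    show "rapid_decay (symbol_homotopy R z0 p)" if "p \<in> K" for p
      using rapid_decay_symbol_homotopy[where R=R and \<eta>="fst p" and t="snd p", OF rapid[OF nonzero[OF that]]] by simp
    show "\<exists>c. nct_inverse_pair \<theta> (symbol_homotopy R z0 p) c" if "p \<in> K" for p
      using symbol_homotopy_invertible[OF hom \<open>0 < w\<close> ell z0 nonzero[OF that]] that K by (cases p) auto
    show "\<exists>\<delta>>0. \<forall>q\<in>K. dist q p < \<delta> \<longrightarrow> wnorm 0 (\<lambda>k. symbol_homotopy R z0 q k - symbol_homotopy R z0 p k) < e"
      if "p \<in> K" "0 < e" for p e
      using symbol_homotopy_continuous[OF smooth rapid nonzero[OF that(1)] that(2), of "snd p" z0]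
      by (metis K nonzero prod.collapse)
  qed blast
  define \<epsilon> where "\<epsilon> = min (cmod z0) (1 / (2 * (\<bar>M\<bar> + 1)))"
  have "0 < \<epsilon>"
    using z0 by (simp add: \<epsilon>_def Theta_def add_nonneg_pos)
  moreover have "z \<in> Theta \<theta> R" if "z \<in> ball z0 \<epsilon>" for z
  proof (rule Theta_of_symbol_homotopy_bound[OF hom])
    show "\<exists>c. nct_inverse_pair \<theta> (symbol_homotopy R z0 (\<eta>, t)) c \<and> wnorm 0 c \<le> \<bar>M\<bar> + 1"
      if "norm \<eta> = 1" "0 \<le> t" "t \<le> 1" for \<eta> t
      using M[of "(\<eta>, t)"] that K[of "(\<eta>, t)"] by force
    show "z \<noteq> 0" "cmod (z - z0) \<le> 1 / (2 * (\<bar>M\<bar> + 1))"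
      using that by (auto simp: \<epsilon>_def dist_norm norm_minus_commute)
    show "0 < \<bar>M\<bar> + 1"
      by linarith
  qed
  ultimately show "\<exists>\<epsilon>>0. ball z0 \<epsilon> \<subseteq> Theta \<theta> R"
    by blast
qed

theorem lemma6p6:
  fixes \<theta> :: "real^'n::{finite,linorder}^'n::{finite,linorder}"
    and w :: real
    and \<rho> :: "real^'n::{finite,linorder} \<Rightarrow> int^'n::{finite,linorder} \<Rightarrow> complex"
    and \<rho>s :: "nat \<Rightarrow> real^'n::{finite,linorder} \<Rightarrow> int^'n::{finite,linorder} \<Rightarrow> complex"
  assumes "CARD('n) \<ge> 2"
    and "\<forall>i j. \<theta>$i$j = - \<theta>$j$i"
    and "w > 0"
    and "classical_symbol w \<rho> \<rho>s"
    and "nct_elliptic \<theta> (\<rho>s 0)"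
    and "Theta \<theta> (\<rho>s 0) \<noteq> {}"
  shows "open (Theta \<theta> (\<rho>s 0)) \<and> is_cone (Theta \<theta> (\<rho>s 0))"
proof -
  have "valued_smooth_on (- {0}) (\<rho>s 0) \<and> (\<forall>t \<xi>. 0 < t \<and> \<xi> \<noteq> 0 \<longrightarrow>
      \<rho>s 0 (t *\<^sub>R \<xi>) = (\<lambda>k. complex_of_real (t powr (w - real 0)) * \<rho>s 0 \<xi> k))"
    using \<open>classical_symbol w \<rho> \<rho>s\<close> unfolding classical_symbol_def by blast
  then have smooth: "valued_smooth_on (- {0}) (\<rho>s 0)"
    and hom: "\<And>t \<xi>. 0 < t \<Longrightarrow> \<xi> \<noteq> 0 \<Longrightarrow> \<rho>s 0 (t *\<^sub>R \<xi>) = (\<lambda>k. complex_of_real (t powr w) * \<rho>s 0 \<xi> k)"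
    by simp_all
  show ?thesis
    using open_Theta[OF hom \<open>w > 0\<close> smooth \<open>nct_elliptic \<theta> (\<rho>s 0)\<close>] is_cone_Theta[OF hom \<open>w > 0\<close>]
    by simp
qed

end
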